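(* Let $E$ be a Borel space and $Q$ a semi-Markov kernel on $\mathbb{R}_+\times E$ given $E$, let $c,g:E\to[0,\infty)$ be bounded measurable functions, fix $T\in\mathbb{R}_+$, and suppose $\beta:=\sup_{x\in E}Q(T,E\mid x)<1$. For $\varepsilon>0$ let $$N_\varepsilon=\Big\lceil\frac{\log(\varepsilon(1-\beta))-\log(M+1)}{\log\beta}\Big\rceil,\qquad M=T\|c\|+\|g\|,$$ let $V^*_{N_\varepsilon}$ be the $N_\varepsilon$-th iterate defined by $V^*_0\equiv0$ and $V^*_{n+1}=\mathbb{G}V^*_n$ on $[0,T]\times E$, and let $D^\varepsilon=\{(s,x)\in(0,T]\times E: g(x)=\mathbb{G}V^*_{N_\varepsilon}(s,x)\}$. Then: (a) the map defined for $\omega=(x_0,t_1,x_1,\dots)\in\Omega$ by $$\tau^\varepsilon(\omega)=\inf\Big\{n\in\mathbb{N}: \Big(T-\sum_{k=1}^n t_k,x_n\Big)\in D^\varepsilon\Big\}\wedge\inf\Big\{n\in\mathbb{N}: T\le\sum_{k=1}^n t_k\Big\}$$ is an $\varepsilon$-$T$-optimal stopping time, i.e. $V^{\tau^\varepsilon}(T,x)-V^*(T,x)\le\varepsilon$ for all $x\in E$; (b) if moreover $\inf_{(s,x)\in((0,T]\times E)\setminus D^\varepsilon}\big(g(x)-\mathbb{G}V^*_{N_\varepsilon}(s,x)\big)>\varepsilon$, then $\tau^\varepsilon$ is also a $T$-optimal stopping time, i.e. $V^{\tau^\varepsilon}(T,x)=V^*(T,x)$ for all $x\in E$.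
   Context: $\|f\|=\sup_{x\in C}|f(x)|$ for a function $f$ on a set $C$; $\lceil y\rceil=\min\{n\in\mathbb{N}:n\ge y\}$, $\mathbb{N}=\{0,1,2,\dots\}$; $\inf\emptyset=+\infty$. Semi-Markov kernel: for each $B\in\mathcal{B}(E)$ and $x\in E$, $t\mapsto Q(t,B\mid x)$ is nondecreasing, right-continuous on $\mathbb{R}_+$ with $Q(0,B\mid x)=0$; for each $t$, $Q(t,\cdot\mid\cdot)$ is a substochastic kernel on $E$; $\lim_{t\to\infty}Q(t,\cdot\mid\cdot)$ is a stochastic kernel on $E$. Let $\Omega=\{(x_0,t_1,x_1,t_2,x_2,\dots): x_0\in E,\ (t_n,x_n)\in\mathbb{R}_+\times E\}$ with its product Borel $\sigma$-algebra; $X_n(\omega)=x_n$, $T_0=0$, $T_{n+1}(\omega)=t_{n+1}$, $S_n=\sum_{k=0}^n T_k$, $Y_n=(X_0,T_1,X_1,\dots,T_n,X_n)$, $\mathcal{F}_n=\sigma(T_0,X_0,\dots,T_n,X_n)$. For $x\in E$, $\mathbb{P}_x$ is the unique probability measure on $\Omega$ with $\mathbb{P}_x(T_0=0,X_0=x)=1$ and $\mathbb{P}_x(T_{n+1}\le t,X_{n+1}\in B\mid Y_n)=Q(t,B\mid X_n)$; $\mathbb{E}_x$ its expectation. $X(t)=X_n$ for $S_n\le t<S_{n+1}$. A stopping time is $\tau:\Omega\to\mathbb{N}\cup\{+\infty\}$ with $\{\tau=n\}\in\mathcal{F}_n$ for all $n$; $\Gamma$ is the set of stopping times. For $s\in\mathbb{R}_+$,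 $\tau\in\Gamma$: $R^s_\tau=\int_0^{S_\tau}c(X(t))\,dt+g(X(S_\tau))$ if $S_\tau<s$, and $R^s_\tau=\int_0^s c(X(t))\,dt$ if $S_\tau\ge s$ (with $S_\tau=\lim_nS_n$ on $\{\tau=\infty\}$); $V^\tau(s,x)=\mathbb{E}_x[R^s_\tau]$, $V^*(s,x)=\inf_{\tau\in\Gamma}V^\tau(s,x)$. For Borel $u:[0,T]\times E\to[0,\infty]$, $\mathbb{G}u(s,x)=\min\Big\{c(x)\int_0^s(1-Q(t,E\mid x))\,dt+\int_E\int_{[0,s]}u(s-t,y)\,Q(dt,dy\mid x),\ g(x)\Big\}$. *)

theory Defs
  imports "HOL-Probability.Probability"
begin

(* State space E: the type 'e (a Polish space with its Borel sigma-algebra).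
   Time/state pairs (t,y) live in R_+ x E, with measurable structure Mstep. *)

definition Mstep :: "(real \<times> 'e::polish_space) measure" where
  "Mstep = restrict_space borel ({0..} \<times> UNIV)"

(* A semi-Markov kernel on R_+ x E given E: a stochastic kernel K from E to R_+ x E
   with no mass at time 0; Q(t,B|x) = K x ([0,t] x B). *)
definition semi_markov_kernel :: "('e::polish_space \<Rightarrow> (real \<times> 'e) measure) \<Rightarrow> bool" where
  "semi_markov_kernel K \<longleftrightarrow> K \<in> borel \<rightarrow>\<^sub>M prob_algebra Mstep \<and>
     (\<forall>x. emeasure (K x) ({0} \<times> UNIV) = 0)"

definition Qk :: "('e::polish_space \<Rightarrow> (real \<times> 'e) measure) \<Rightarrow> real \<Rightarrow> 'e set \<Rightarrow> 'e \<Rightarrow> real" where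
  "Qk K t B x = measure (K x) ({0..t} \<times> B)"

(* Canonical space Omega = E x (R_+ x E)^N; omega = (x0, s) with s n = (t_{n+1}, x_{n+1}). *)
type_synonym 'e omega = "'e \<times> (nat \<Rightarrow> real \<times> 'e)"

definition Omega :: "'e::polish_space omega measure" where
  "Omega = (borel :: 'e measure) \<Otimes>\<^sub>M (\<Pi>\<^sub>M n\<in>(UNIV::nat set). Mstep)"

definition Xn :: "'e::polish_space omega \<Rightarrow> nat \<Rightarrow> 'e" where
  "Xn \<omega> n = (if n = 0 then fst \<omega> else snd (snd \<omega> (n - 1)))"

definition Tn :: "'e::polish_space omega \<Rightarrow> nat \<Rightarrow> real" where
  "Tn \<omega> n = (if n = 0 then 0 else fst (snd \<omega> (n - 1)))"

definition Sn :: "'e::polish_space omega \<Rightarrow> nat \<Rightarrow> real" where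
  "Sn \<omega> n = (\<Sum>k\<le>n. Tn \<omega> k)"

definition Yn :: "nat \<Rightarrow> 'e::polish_space omega \<Rightarrow> 'e \<times> (nat \<Rightarrow> real \<times> 'e)" where
  "Yn n \<omega> = (fst \<omega>, restrict (snd \<omega>) {..<n})"

definition Fn :: "nat \<Rightarrow> 'e::polish_space omega measure" where
  "Fn n = vimage_algebra (space Omega) (Yn n)
            ((borel :: 'e measure) \<Otimes>\<^sub>M (\<Pi>\<^sub>M k\<in>{..<n}. Mstep))"

definition is_stopping_time :: "('e::polish_space omega \<Rightarrow> enat) \<Rightarrow> bool" where
  "is_stopping_time \<tau> \<longleftrightarrow> (\<forall>n::nat. {\<omega> \<in> space Omega. \<tau> \<omega> = enat n} \<in> sets (Fn n))"

(* P is the law P_x of the embedded Markov renewal process started at x *)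
definition path_measure :: "('e::polish_space \<Rightarrow> (real \<times> 'e) measure) \<Rightarrow> 'e \<Rightarrow> 'e omega measure \<Rightarrow> bool" where
  "path_measure K x P \<longleftrightarrow> prob_space P \<and> sets P = sets Omega \<and>
     measure P {\<omega> \<in> space Omega. Xn \<omega> 0 = x} = 1 \<and>
     (\<forall>n. \<forall>A \<in> sets (Fn n). \<forall>t \<ge> 0. \<forall>B \<in> sets (borel :: 'e measure).
        measure P {\<omega> \<in> A. Tn \<omega> (Suc n) \<le> t \<and> Xn \<omega> (Suc n) \<in> B}
          = (\<integral>\<omega>. indicator A \<omega> * Qk K t B (Xn \<omega> n) \<partial>P))"

definition Sinf :: "'e::polish_space omega \<Rightarrow> ereal" where
  "Sinf \<omega> = (SUP n. ereal (Sn \<omega> n))"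

definition Stau :: "('e::polish_space omega \<Rightarrow> enat) \<Rightarrow> 'e omega \<Rightarrow> ereal" where
  "Stau \<tau> \<omega> = (case \<tau> \<omega> of enat n \<Rightarrow> ereal (Sn \<omega> n) | \<infinity> \<Rightarrow> Sinf \<omega>)"

(* X(t) = X_n for S_n <= t < S_{n+1}  (unspecified when t >= S_infinity) *)
definition Xt :: "'e::polish_space omega \<Rightarrow> real \<Rightarrow> 'e" where
  "Xt \<omega> t = Xn \<omega> (LEAST n. t < Sn \<omega> (Suc n))"

definition Rcost :: "('e::polish_space \<Rightarrow> real) \<Rightarrow> ('e \<Rightarrow> real) \<Rightarrow> real \<Rightarrow> ('e omega \<Rightarrow> enat) \<Rightarrow> 'e omega \<Rightarrow> real" where
  "Rcost c g s \<tau> \<omega> =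
     (if Stau \<tau> \<omega> < ereal s
      then (LINT t:{0..real_of_ereal (Stau \<tau> \<omega>)}|lborel. c (Xt \<omega> t)) + g (Xt \<omega> (real_of_ereal (Stau \<tau> \<omega>)))
      else (LINT t:{0..s}|lborel. c (Xt \<omega> t)))"

definition Vtau :: "('e::polish_space \<Rightarrow> 'e omega measure) \<Rightarrow> ('e \<Rightarrow> real) \<Rightarrow> ('e \<Rightarrow> real) \<Rightarrow> ('e omega \<Rightarrow> enat) \<Rightarrow> real \<Rightarrow> 'e \<Rightarrow> real" where
  "Vtau P c g \<tau> s x = (\<integral>\<omega>. Rcost c g s \<tau> \<omega> \<partial>P x)"

definition Vstar :: "('e::polish_space \<Rightarrow> 'e omega measure) \<Rightarrow> ('e \<Rightarrow> real) \<Rightarrow> ('e \<Rightarrow> real) \<Rightarrow> real \<Rightarrow> 'e \<Rightarrow> real" where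
  "Vstar P c g s x = (INF \<tau> \<in> {\<tau>. is_stopping_time \<tau>}. Vtau P c g \<tau> s x)"

definition Gop :: "('e::polish_space \<Rightarrow> (real \<times> 'e) measure) \<Rightarrow> ('e \<Rightarrow> real) \<Rightarrow> ('e \<Rightarrow> real)
                    \<Rightarrow> (real \<Rightarrow> 'e \<Rightarrow> real) \<Rightarrow> real \<Rightarrow> 'e \<Rightarrow> real" where
  "Gop K c g u s x = min
     (c x * (LINT t:{0..s}|lborel. 1 - Qk K t UNIV x)
       + (\<integral>p. indicator ({0..s} \<times> UNIV) p * u (s - fst p) (snd p) \<partial>K x))
     (g x)"

definition Vn :: "('e::polish_space \<Rightarrow> (real \<times> 'e) measure) \<Rightarrow> ('e \<Rightarrow> real) \<Rightarrow> ('e \<Rightarrow> real) \<Rightarrow> nat \<Rightarrow> real \<Rightarrow> 'e \<Rightarrow> real" where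
  "Vn K c g n = (Gop K c g ^^ n) (\<lambda>_ _. 0)"

definition supnorm :: "('e::polish_space \<Rightarrow> real) \<Rightarrow> real" where
  "supnorm f = (SUP x. \<bar>f x\<bar>)"

definition betaQ :: "('e::polish_space \<Rightarrow> (real \<times> 'e) measure) \<Rightarrow> real \<Rightarrow> real" where
  "betaQ K T = (SUP x. Qk K T UNIV x)"

(* N_eps = ceil((log(eps(1-beta)) - log(M+1)) / log beta), M = T||c|| + ||g||;
   when beta = 0 (log beta = -infinity) the quotient is 0, so N_eps = 0 *)
definition Neps :: "('e::polish_space \<Rightarrow> (real \<times> 'e) measure) \<Rightarrow> ('e \<Rightarrow> real) \<Rightarrow> ('e \<Rightarrow> real) \<Rightarrow> real \<Rightarrow> real \<Rightarrow> nat" where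
  "Neps K c g T \<epsilon> =
     (let \<beta> = betaQ K T; M = T * supnorm c + supnorm g in
      if \<beta> = 0 then 0
      else nat \<lceil>(ln (\<epsilon> * (1 - \<beta>)) - ln (M + 1)) / ln \<beta>\<rceil>)"

definition Deps :: "('e::polish_space \<Rightarrow> (real \<times> 'e) measure) \<Rightarrow> ('e \<Rightarrow> real) \<Rightarrow> ('e \<Rightarrow> real) \<Rightarrow> real \<Rightarrow> real \<Rightarrow> (real \<times> 'e) set" where
  "Deps K c g T \<epsilon> = {(s, x). s \<in> {0<..T} \<and>
       g x = Gop K c g (Vn K c g (Neps K c g T \<epsilon>)) s x}"

definition tau_eps :: "('e::polish_space \<Rightarrow> (real \<times> 'e) measure) \<Rightarrow> ('e \<Rightarrow> real) \<Rightarrow> ('e \<Rightarrow> real) \<Rightarrow> real \<Rightarrow> real \<Rightarrow> 'e omega \<Rightarrow> enat" where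
  "tau_eps K c g T \<epsilon> \<omega> =
     min (Inf (enat ` {n. (T - Sn \<omega> n, Xn \<omega> n) \<in> Deps K c g T \<epsilon>}))
         (Inf (enat ` {n. T \<le> Sn \<omega> n}))"

end

theory Submission
  imports Defs
begin

(*
  Let V_n = G^n 0. The continuation part of G integrates only against Q(t, . | x) with t <= T,
  a measure of mass at most beta < 1, so G is a beta-contraction on [0,T] x E and
  |V_(n+1) - V_n| <= beta^n ||g||.

  For any stopping time sigma, the expectation of "running cost up to step k before sigma, plus the
  stopping reward if sigma < k, plus V_(n-k)(T - S_k, X_k) if k <= sigma" is nondecreasing in k:
  each step is one application of the Markov property at time k. It equals V_n(T,x) for k = 0
  and is below the expected cost of sigma for k = n, so V_n <= V*.

  Conversely, let U >= 0 be bounded, U >= g on D_eps and U >= (continuation value of U) off D_eps.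
  Built with U and tau_eps, the same expectation is nonincreasing in k; the cost incurred after
  step k is at most M = T ||c|| + ||g|| and only occurs on {S_k <= T}, an event of probability at
  most beta^k. Hence V^tau_eps(T,x) <= U(T,x).

  For (a) take U = V_(N+1) + beta^(N+1) ||g|| / (1 - beta); the choice of N_eps makes the shift at
  most eps. Under the gap condition of (b), V_n equals its continuation value off D_eps for every
  n > N_eps, so U = V_n + beta^n ||g|| / (1 - beta) qualifies for all these n, and n -> infinity
  gives V^tau_eps <= V*.
*)

section \<open>The canonical path space\<close>

lemma space_Mstep: "space Mstep = {0..} \<times> UNIV"
  by (simp add: Mstep_def space_restrict_space)

lemma sets_Mstep: "sets Mstep = {S \<inter> ({0..} \<times> UNIV) | S. S \<in> sets borel}"
  by (auto simp: Mstep_def sets_restrict_space)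

lemma space_Omega: "space Omega = UNIV \<times> (UNIV \<rightarrow>\<^sub>E ({0..} \<times> UNIV))"
  by (simp add: Omega_def space_pair_measure space_PiM space_Mstep PiE_def)

lemma measurable_Mstep_fst[measurable]: "fst \<in> Mstep \<rightarrow>\<^sub>M borel"
  unfolding Mstep_def by (rule measurable_restrict_space1) (simp add: borel_prod[symmetric])

lemma measurable_Mstep_snd[measurable]: "snd \<in> Mstep \<rightarrow>\<^sub>M borel"
  unfolding Mstep_def by (rule measurable_restrict_space1) (simp add: borel_prod[symmetric])

lemma measurable_Omega_fst[measurable]: "(\<lambda>\<omega>. fst \<omega>) \<in> Omega \<rightarrow>\<^sub>M borel"
  unfolding Omega_def by measurable

lemma measurable_Omega_step[measurable]: "(\<lambda>\<omega>. snd \<omega> m) \<in> Omega \<rightarrow>\<^sub>M Mstep"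
  unfolding Omega_def by measurable

lemma measurable_Xn[measurable]: "(\<lambda>\<omega>. Xn \<omega> n) \<in> Omega \<rightarrow>\<^sub>M borel"
  unfolding Xn_def by (cases "n = 0") simp_all

lemma measurable_Tn[measurable]: "(\<lambda>\<omega>. Tn \<omega> n) \<in> Omega \<rightarrow>\<^sub>M borel"
  unfolding Tn_def by (cases "n = 0") simp_all

lemma measurable_Sn[measurable]: "(\<lambda>\<omega>. Sn \<omega> n) \<in> Omega \<rightarrow>\<^sub>M borel"
  unfolding Sn_def by measurable

lemma Tn_Suc: "Tn \<omega> (Suc j) = fst (snd \<omega> j)"
  by (simp add: Tn_def)

lemma Xn_Suc: "Xn \<omega> (Suc j) = snd (snd \<omega> j)"
  by (simp add: Xn_def)

lemma Sn_conv_sum: "Sn \<omega> j = (\<Sum>i<j. fst (snd \<omega> i))"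
  by (induct j) (simp_all add: Sn_def Tn_def)

lemma Sn_Suc: "Sn \<omega> (Suc j) = Sn \<omega> j + fst (snd \<omega> j)"
  by (simp add: Sn_conv_sum)

lemma Omega_sojourn_nonneg: "\<omega> \<in> space Omega \<Longrightarrow> 0 \<le> fst (snd \<omega> i)"
  by (auto simp: space_Omega PiE_def Pi_def mem_Times_iff)

lemma Sn_nonneg: "\<omega> \<in> space Omega \<Longrightarrow> 0 \<le> Sn \<omega> i"
  by (auto simp: Sn_conv_sum Omega_sojourn_nonneg intro!: sum_nonneg)

lemma Sn_mono: "\<omega> \<in> space Omega \<Longrightarrow> i \<le> j \<Longrightarrow> Sn \<omega> i \<le> Sn \<omega> j"
  unfolding Sn_conv_sum by (rule sum_mono2) (auto simp: Omega_sojourn_nonneg)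

definition history_space :: "nat \<Rightarrow> ('e::polish_space \<times> (nat \<Rightarrow> real \<times> 'e)) measure" where
  "history_space n = (borel :: 'e measure) \<Otimes>\<^sub>M (\<Pi>\<^sub>M k\<in>{..<n}. Mstep)"

definition hist_X :: "nat \<Rightarrow> 'e \<times> (nat \<Rightarrow> real \<times> 'e) \<Rightarrow> 'e" where
  "hist_X j y = (if j = 0 then fst y else snd (snd y (j - 1)))"

definition hist_S :: "nat \<Rightarrow> 'e \<times> (nat \<Rightarrow> real \<times> 'e) \<Rightarrow> real" where
  "hist_S j y = (\<Sum>i<j. fst (snd y i))"

lemma measurable_Yn[measurable]: "Yn n \<in> Omega \<rightarrow>\<^sub>M history_space n"
  unfolding Omega_def history_space_def Yn_def
  by (intro measurable_Pair measurable_compose[OF measurable_fst]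
      measurable_compose[OF measurable_snd measurable_restrict_subset]) auto

lemma Xn_eq_hist_X: "j \<le> m \<Longrightarrow> Xn \<omega> j = hist_X j (Yn m \<omega>)"
  by (auto simp: Xn_def hist_X_def Yn_def)

lemma Sn_eq_hist_S: "j \<le> m \<Longrightarrow> Sn \<omega> j = hist_S j (Yn m \<omega>)"
  by (auto simp: Sn_conv_sum hist_S_def Yn_def intro!: sum.cong)

lemma measurable_hist_X[measurable]: "j \<le> m \<Longrightarrow> hist_X j \<in> history_space m \<rightarrow>\<^sub>M borel"
  unfolding hist_X_def history_space_def
  by (cases "j = 0") (auto intro!: measurable_compose[OF measurable_snd measurable_Mstep_snd]
        measurable_compose[OF measurable_snd measurable_component_singleton])

lemma measurable_hist_S[measurable]: "j \<le> m \<Longrightarrow> hist_S j \<in> history_space m \<rightarrow>\<^sub>M borel"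
  unfolding hist_S_def history_space_def
  by (intro borel_measurable_sum measurable_compose[OF _ measurable_Mstep_fst]
       measurable_compose[OF measurable_snd measurable_component_singleton]) auto

lemma hist_S_nonneg: "y \<in> space (history_space m) \<Longrightarrow> 0 \<le> hist_S m y"
  unfolding hist_S_def history_space_def
  by (intro sum_nonneg) (auto simp: space_pair_measure space_PiM space_Mstep PiE_def Pi_def mem_Times_iff)

lemma Fn_eq: "Fn n = vimage_algebra (space Omega) (Yn n) (history_space n)"
  by (simp add: Fn_def history_space_def)

lemma sets_Fn: "sets (Fn n) = {Yn n -` A \<inter> space Omega | A. A \<in> sets (history_space n)}"
  unfolding Fn_eq by (rule sets_vimage_algebra2) (use measurable_space[OF measurable_Yn] in blast)

lemma sets_Fn_subset: "sets (Fn n) \<subseteq> sets Omega"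
  using measurable_Yn[of n] unfolding measurable_iff_sets Fn_eq by blast

lemma space_Omega_in_Fn: "space Omega \<in> sets (Fn n)"
  unfolding Fn_eq using sets.top[of "vimage_algebra (space Omega) (Yn n) (history_space n)"] by simp

lemma sets_Fn_mono:
  assumes "j \<le> m" shows "sets (Fn j :: 'e::polish_space omega measure) \<subseteq> sets (Fn m)"
proof
  fix A :: "'e omega set" assume "A \<in> sets (Fn j)"
  then obtain a where a: "a \<in> sets (history_space j)" and A: "A = Yn j -` a \<inter> space Omega"
    unfolding sets_Fn by blast
  define restr where "restr y = (fst y, restrict (snd y) {..<j})" for y :: "'e \<times> (nat \<Rightarrow> real \<times> 'e)"
  have restr: "restr \<in> history_space m \<rightarrow>\<^sub>M history_space j"
    unfolding restr_def history_space_def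
    by (intro measurable_Pair measurable_compose[OF measurable_fst]
        measurable_compose[OF measurable_snd measurable_restrict_subset]) (use assms in auto)
  have "Yn j \<omega> = restr (Yn m \<omega>)" for \<omega>
    using assms by (auto simp: Yn_def restr_def restrict_restrict Int_absorb2)
  then have "A = Yn m -` (restr -` a \<inter> space (history_space m)) \<inter> space Omega"
    using measurable_space[OF measurable_Yn] by (auto simp: A)
  moreover have "restr -` a \<inter> space (history_space m) \<in> sets (history_space m)"
    using restr a by (rule measurable_sets)
  ultimately show "A \<in> sets (Fn m)" unfolding sets_Fn by blast
qed

section \<open>Semi-Markov kernels and the Markov property\<close>

definition time_rects :: "(real \<times> 'e::polish_space) set set" where
  "time_rects = {{0..t} \<times> B | t B. 0 \<le> t \<and> B \<in> sets borel}"

lemma time_rects_subset: "time_rects \<subseteq> Pow ({0..} \<times> UNIV)"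
  by (auto simp: time_rects_def)

lemma time_rectsI: "0 \<le> t \<Longrightarrow> B \<in> sets borel \<Longrightarrow> {0..t} \<times> B \<in> time_rects"
  unfolding time_rects_def by blast

lemma time_rects_in_Mstep: "(X :: (real \<times> 'e::polish_space) set) \<in> time_rects \<Longrightarrow> X \<in> sets Mstep"
proof -
  assume "X \<in> time_rects"
  then obtain t B where X: "X = {0..t} \<times> B" "B \<in> sets (borel :: 'e measure)"
    by (auto simp: time_rects_def)
  then have "X \<in> sets ((borel :: real measure) \<Otimes>\<^sub>M (borel :: 'e measure))" by auto
  then have "X \<in> sets (borel :: (real \<times> 'e) measure)" by (metis borel_prod)
  moreover have "X = X \<inter> ({0..} \<times> UNIV)" using X by auto
  ultimately show ?thesis unfolding sets_Mstep by blast
qed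

lemma Icc_times_UNIV_in_Mstep: "{0..t} \<times> UNIV \<in> sets Mstep"
proof cases
  assume "0 \<le> t" then show ?thesis by (intro time_rects_in_Mstep time_rectsI) auto
next
  assume "\<not> 0 \<le> t" then have "{0..t} \<times> UNIV = ({} :: (real \<times> 'a::polish_space) set)" by auto
  then show ?thesis by simp
qed

lemma Int_stable_time_rects: "Int_stable (time_rects :: (real \<times> 'e::polish_space) set set)"
proof (rule Int_stableI)
  fix a b :: "(real \<times> 'e) set" assume "a \<in> time_rects" "b \<in> time_rects"
  then obtain t B t' B' where "a = {0..t} \<times> B" "0 \<le> t" "B \<in> sets borel"
     "b = {0..t'} \<times> B'" "0 \<le> t'" "B' \<in> sets borel" by (auto simp: time_rects_def)
  then have "a \<inter> b = {0..min t t'} \<times> (B \<inter> B')" "0 \<le> min t t'" "B \<inter> B' \<in> sets borel" by auto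
  then show "a \<inter> b \<in> time_rects" by (metis time_rectsI)
qed

lemma Times_in_sigma_time_rects:
  fixes a :: "real set" and b :: "'e::polish_space set"
  assumes a: "a \<in> sets borel" and b: "b \<in> sets borel"
  shows "(a \<inter> {0..}) \<times> b \<in> sigma_sets ({0..} \<times> UNIV) time_rects"
proof -
  let ?\<Omega> = "{0..} \<times> (UNIV :: 'e set)"
  interpret S: sigma_algebra ?\<Omega> "sigma_sets ?\<Omega> time_rects"
    by (rule sigma_algebra_sigma_sets) (rule time_rects_subset)
  have half_line: "{0..} \<times> b = (\<Union>i::nat. {0..real i} \<times> b)"
    by (auto simp: real_arch_simple)
  have "a \<in> sigma_sets UNIV (range atMost)"
    using a by (simp add: borel_eq_atMost)
  then show ?thesis
  proof (induct a rule: sigma_sets.induct)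
    case (Basic a)
    then obtain t where t: "a = {..t}" by auto
    show ?case
    proof cases
      assume "0 \<le> t"
      then have "(a \<inter> {0..}) \<times> b = {0..t} \<times> b" using t by auto
      then show ?thesis using b \<open>0 \<le> t\<close> by (auto intro!: sigma_sets.Basic time_rectsI)
    next
      assume "\<not> 0 \<le> t"
      then have "(a \<inter> {0..}) \<times> b = {}" using t by auto
      then show ?thesis using sigma_sets.Empty by metis
    qed
  next
    case Empty then show ?case by (simp add: sigma_sets.Empty)
  next
    case (Compl a)
    have "{0..} \<times> b \<in> sigma_sets ?\<Omega> time_rects"
      unfolding half_line using b by (intro S.countable_UN' sigma_sets.Basic) (auto intro!: time_rectsI)
    moreover have "((UNIV - a) \<inter> {0..}) \<times> b = ({0..} \<times> b) - ((a \<inter> {0..}) \<times> b)" by auto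
    ultimately show ?case using Compl by (simp add: S.Diff)
  next
    case (Union A)
    have "((\<Union>i. A i) \<inter> {0..}) \<times> b = (\<Union>i. (A i \<inter> {0..}) \<times> b)" by auto
    then show ?case by (simp only:) (rule sigma_sets.Union, rule Union(2))
  qed
qed

lemma sets_Mstep_time_rects:
  "sets Mstep = sigma_sets ({0..} \<times> UNIV) (time_rects :: (real \<times> 'e::polish_space) set set)"
proof
  let ?\<Omega> = "{0..} \<times> (UNIV :: 'e set)"
  interpret S: sigma_algebra ?\<Omega> "sigma_sets ?\<Omega> time_rects"
    by (rule sigma_algebra_sigma_sets) (rule time_rects_subset)
  show "sigma_sets ?\<Omega> time_rects \<subseteq> sets Mstep"
    using sets.sigma_sets_subset[of time_rects Mstep] time_rects_in_Mstep by (auto simp: space_Mstep)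
  have restricted: "S \<inter> ?\<Omega> \<in> sigma_sets ?\<Omega> time_rects"
    if "S \<in> sigma_sets UNIV {a \<times> b | a b. a \<in> sets (borel :: real measure) \<and> b \<in> sets (borel :: 'e measure)}"
    for S
    using that
  proof (induct S rule: sigma_sets.induct)
    case (Basic S)
    then obtain a b where "S = a \<times> b" "a \<in> sets (borel :: real measure)" "b \<in> sets (borel :: 'e measure)"
      by auto
    moreover have "(a \<times> b) \<inter> ?\<Omega> = (a \<inter> {0..}) \<times> b" by auto
    ultimately show ?case using Times_in_sigma_time_rects by simp
  next
    case Empty then show ?case by (simp add: sigma_sets.Empty)
  next
    case (Compl S)
    have "(UNIV - S) \<inter> ?\<Omega> = ?\<Omega> - (S \<inter> ?\<Omega>)" by auto
    then show ?case using Compl by (simp add: S.compl_sets)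
  next
    case (Union A)
    have "(\<Union>i. A i) \<inter> ?\<Omega> = (\<Union>i. A i \<inter> ?\<Omega>)" by auto
    then show ?case by (simp only:) (rule sigma_sets.Union, rule Union(2))
  qed
  show "sets Mstep \<subseteq> sigma_sets ?\<Omega> time_rects"
  proof
    fix S :: "(real \<times> 'e) set" assume "S \<in> sets Mstep"
    then obtain S' where S': "S = S' \<inter> ?\<Omega>" "S' \<in> sets (borel :: (real \<times> 'e) measure)"
      unfolding sets_Mstep by auto
    then have "S' \<in> sets ((borel :: real measure) \<Otimes>\<^sub>M (borel :: 'e measure))"
      by (metis borel_prod)
    then show "S \<in> sigma_sets ?\<Omega> time_rects"
      using restricted S' by (simp add: sets_pair_measure)
  qed
qed

lemma integral_measurable_subprob_algebra2:
  fixes f :: "_ \<Rightarrow> _ \<Rightarrow> real"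
  assumes f[measurable]: "(\<lambda>(x, y). f x y) \<in> borel_measurable (M \<Otimes>\<^sub>M N)"
  assumes N[measurable]: "L \<in> measurable M (subprob_algebra N)"
  shows "(\<lambda>x. integral\<^sup>L (L x) (f x)) \<in> borel_measurable M"
proof -
  note integral_measurable_subprob_algebra[measurable]
  note measurable_distr2[measurable]
  have "(\<lambda>x. integral\<^sup>L (distr (L x) (M \<Otimes>\<^sub>M N) (\<lambda>y. (x, y))) (\<lambda>(x, y). f x y)) \<in> borel_measurable M"
    by measurable
  then show "(\<lambda>x. integral\<^sup>L (L x) (f x)) \<in> borel_measurable M"
    by (rule measurable_cong[THEN iffD1, rotated]) (simp add: integral_distr)
qed

lemma nn_integral_lborel_before:
  assumes "0 \<le> a"
  shows "(\<integral>\<^sup>+t. ennreal (of_bool (0 \<le> t \<and> t \<le> s \<and> t < a)) \<partial>lborel) = ennreal (max 0 (min a s))"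
proof -
  have "(\<integral>\<^sup>+t. ennreal (of_bool (0 \<le> t \<and> t \<le> s \<and> t < a)) \<partial>lborel)
      = (\<integral>\<^sup>+t. indicator {t. 0 \<le> t \<and> t \<le> s \<and> t < a} t \<partial>lborel)"
    by (intro nn_integral_cong) (auto simp: indicator_def)
  also have "\<dots> = emeasure lborel {t. 0 \<le> t \<and> t \<le> s \<and> t < a}"
    by (rule nn_integral_indicator) simp
  also have "\<dots> = ennreal (max 0 (min a s))"
  proof -
    consider "a \<le> s" | "s < a" "0 \<le> s" | "s < 0" by linarith
    then show ?thesis
    proof cases
      case 1
      then have "{t. 0 \<le> t \<and> t \<le> s \<and> t < a} = {0..<a}" by auto
      then show ?thesis using 1 assms by simp
    next
      case 2
      then have "{t. 0 \<le> t \<and> t \<le> s \<and> t < a} = {0..s}" by auto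
      then show ?thesis using 2 by simp
    next
      case 3
      then have "{t. 0 \<le> t \<and> t \<le> s \<and> t < a} = {}" by auto
      then show ?thesis using 3 by (simp del: Collect_empty_eq)
    qed
  qed
  finally show ?thesis .
qed

lemma nn_integral_survival:
  fixes \<mu> :: "(real \<times> 'e::polish_space) measure"
  assumes "prob_space \<mu>" and sets_\<mu>: "sets \<mu> = sets Mstep"
  shows "(\<integral>\<^sup>+p. ennreal (of_bool (0 \<le> t \<and> t \<le> s \<and> t < fst p)) \<partial>\<mu>)
    = ennreal (indicator {0..s} t * (1 - measure \<mu> ({0..t} \<times> UNIV)))"
proof -
  interpret \<mu>: prob_space \<mu> by fact
  have space_\<mu>: "space \<mu> = {0..} \<times> UNIV"
    using sets_eq_imp_space_eq[OF sets_\<mu>] by (simp add: space_Mstep)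
  have sets: "{0..t} \<times> UNIV \<in> sets \<mu>" using Icc_times_UNIV_in_Mstep by (simp add: sets_\<mu>)
  have "(\<integral>\<^sup>+p. ennreal (of_bool (0 \<le> t \<and> t \<le> s \<and> t < fst p)) \<partial>\<mu>)
      = (\<integral>\<^sup>+p. ennreal (indicator {0..s} t) * indicator (space \<mu> - {0..t} \<times> UNIV) p \<partial>\<mu>)"
    by (intro nn_integral_cong) (auto simp: indicator_def space_\<mu>)
  also have "\<dots> = ennreal (indicator {0..s} t) * emeasure \<mu> (space \<mu> - {0..t} \<times> UNIV)"
    using sets by (intro nn_integral_cmult_indicator) auto
  also have "\<dots> = ennreal (indicator {0..s} t * (1 - measure \<mu> ({0..t} \<times> UNIV)))"
    using sets by (simp add: \<mu>.emeasure_eq_measure \<mu>.prob_compl ennreal_mult[symmetric] indicator_def)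
  finally show ?thesis .
qed

text \<open>The mean of \<open>min T\<^sub>1 s\<close> as the integral of the survival function (Fubini on
  \<open>{(p, t). 0 \<le> t \<le> s, t < fst p}\<close>).\<close>

lemma integral_survival_eq_integral_min:
  fixes \<mu> :: "(real \<times> 'e::polish_space) measure"
  assumes "prob_space \<mu>" and sets_\<mu>[measurable_cong]: "sets \<mu> = sets Mstep"
  shows "(LINT t:{0..s}|lborel. 1 - measure \<mu> ({0..t} \<times> UNIV)) = (\<integral>p. max 0 (min (fst p) s) \<partial>\<mu>)"
proof -
  interpret \<mu>: prob_space \<mu> by fact
  interpret pair_sigma_finite \<mu> lborel by unfold_locales
  define Q where "Q t = measure \<mu> ({0..t} \<times> UNIV)" for t
  have "mono Q"
    unfolding Q_def mono_def using Icc_times_UNIV_in_Mstep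
    by (intro allI impI \<mu>.finite_measure_mono) (auto simp: sets_\<mu>)
  then have [measurable]: "Q \<in> borel_measurable borel" by (rule borel_measurable_mono)
  have Q_le_1: "Q t \<le> 1" for t unfolding Q_def by (rule \<mu>.prob_le_1)
  have "(LINT t:{0..s}|lborel. 1 - Q t) = (\<integral>t. indicator {0..s} t * (1 - Q t) \<partial>lborel)"
    by (simp add: set_lebesgue_integral_def)
  also have "\<dots> = enn2real (\<integral>\<^sup>+t. ennreal (indicator {0..s} t * (1 - Q t)) \<partial>lborel)"
    using Q_le_1 by (intro integral_eq_nn_integral) (auto simp: indicator_def)
  also have "(\<integral>\<^sup>+t. ennreal (indicator {0..s} t * (1 - Q t)) \<partial>lborel)
      = (\<integral>\<^sup>+p. (\<integral>\<^sup>+t. ennreal (of_bool (0 \<le> t \<and> t \<le> s \<and> t < fst p)) \<partial>lborel) \<partial>\<mu>)"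
    unfolding Q_def nn_integral_survival[OF assms, symmetric] by (rule Fubini') measurable
  also have "\<dots> = (\<integral>\<^sup>+p. ennreal (max 0 (min (fst p) s)) \<partial>\<mu>)"
    using sets_eq_imp_space_eq[OF sets_\<mu>]
    by (intro nn_integral_cong nn_integral_lborel_before) (auto simp: space_Mstep)
  also have "enn2real \<dots> = (\<integral>p. max 0 (min (fst p) s) \<partial>\<mu>)"
    by (rule integral_eq_nn_integral[symmetric]) auto
  finally show ?thesis by (simp add: Q_def)
qed

locale semi_markov =
  fixes K :: "'e::polish_space \<Rightarrow> (real \<times> 'e) measure"
  assumes semi_markov: "semi_markov_kernel K"
begin

lemma measurable_K[measurable]: "K \<in> borel \<rightarrow>\<^sub>M subprob_algebra Mstep"
  using semi_markov unfolding semi_markov_kernel_def by (auto intro: measurable_prob_algebraD)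

lemma prob_space_K: "prob_space (K x)" and sets_K[measurable_cong]: "sets (K x) = sets Mstep"
  using semi_markov measurable_space[of K borel "prob_algebra Mstep" x]
  unfolding semi_markov_kernel_def by (auto simp: space_prob_algebra)

lemma space_K: "space (K x) = {0..} \<times> UNIV"
  using sets_eq_imp_space_eq[OF sets_K[of x]] by (simp add: space_Mstep)

lemma emeasure_K_time_zero: "emeasure (K x) ({0} \<times> UNIV) = 0"
  using semi_markov unfolding semi_markov_kernel_def by auto

lemma Qk_time_zero: "Qk K 0 UNIV x = 0"
  using emeasure_K_time_zero[of x] by (simp add: Qk_def measure_def)

lemma Qk_mono:
  assumes "B \<in> sets borel" "t \<le> t'" shows "Qk K t B x \<le> Qk K t' B x"
proof -
  interpret prob_space "K x" by (rule prob_space_K)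
  have "{0..r} \<times> B \<in> sets (K x)" for r
  proof cases
    assume "0 \<le> r" then show ?thesis using assms by (simp add: sets_K time_rects_in_Mstep time_rectsI)
  next
    assume "\<not> 0 \<le> r" then have "{0..r} \<times> B = {}" by auto
    then show ?thesis by (simp only: sets.empty_sets)
  qed
  then show ?thesis unfolding Qk_def using assms by (intro finite_measure_mono) auto
qed

lemma Qk_le_1: "Qk K t B x \<le> 1"
  unfolding Qk_def by (rule prob_space.prob_le_1[OF prob_space_K])

lemma integral_indicator_time_le: "(\<integral>p. indicator ({0..s} \<times> UNIV) p * D \<partial>K x) = D * Qk K s UNIV x"
proof -
  interpret prob_space "K x" by (rule prob_space_K)
  have "{0..s} \<times> UNIV \<in> sets (K x)" by (simp add: sets_K Icc_times_UNIV_in_Mstep)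
  then show ?thesis by (simp add: Qk_def)
qed

end

locale markov_renewal = semi_markov K
  for K :: "'e::polish_space \<Rightarrow> (real \<times> 'e) measure" +
  fixes x0 :: 'e and P :: "'e omega measure"
  assumes path_measure: "path_measure K x0 P"
begin

lemma prob_space_P: "prob_space P" and sets_P[measurable_cong]: "sets P = sets Omega"
  using path_measure by (auto simp: path_measure_def)

sublocale prob_space P by (rule prob_space_P)

lemma space_P: "space P = space Omega"
  using sets_eq_imp_space_eq[OF sets_P] .

lemma measurable_P_iff: "measurable P N = measurable Omega N"
  by (rule measurable_cong_sets[OF sets_P refl])

lemma measure_path_step:
  "A \<in> sets (Fn n) \<Longrightarrow> 0 \<le> t \<Longrightarrow> B \<in> sets borel \<Longrightarrow>
   measure P {\<omega> \<in> A. Tn \<omega> (Suc n) \<le> t \<and> Xn \<omega> (Suc n) \<in> B}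
     = (\<integral>\<omega>. indicator A \<omega> * Qk K t B (Xn \<omega> n) \<partial>P)"
  using path_measure unfolding path_measure_def by blast

lemma integrable_bounded:
  assumes "f \<in> borel_measurable Omega" and "\<And>\<omega>. \<omega> \<in> space Omega \<Longrightarrow> \<bar>f \<omega>\<bar> \<le> (B::real)"
  shows "integrable P f"
  by (rule integrable_const_bound[where B=B]) (use assms in \<open>auto simp: measurable_P_iff space_P\<close>)

lemma measurable_K_Xn[measurable]: "(\<lambda>\<omega>. K (Xn \<omega> m)) \<in> Omega \<rightarrow>\<^sub>M subprob_algebra Mstep"
  by measurable

lemma emeasure_distr_step:
  assumes A: "A \<in> sets Omega" and b: "b \<in> sets Mstep"
  shows "emeasure (distr (density P (indicator A)) Mstep (\<lambda>\<omega>. snd \<omega> m)) b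
    = emeasure P (A \<inter> {\<omega>. snd \<omega> m \<in> b})"
proof -
  have "emeasure (distr (density P (indicator A)) Mstep (\<lambda>\<omega>. snd \<omega> m)) b
      = emeasure (density P (indicator A)) ((\<lambda>\<omega>. snd \<omega> m) -` b \<inter> space P)"
    using b by (subst emeasure_distr) auto
  also have "\<dots> = emeasure P (A \<inter> ((\<lambda>\<omega>. snd \<omega> m) -` b \<inter> space P))"
    using A b measurable_sets[OF measurable_Omega_step b, of m]
    by (subst emeasure_restricted) (auto simp: sets_P space_P)
  also have "A \<inter> ((\<lambda>\<omega>. snd \<omega> m) -` b \<inter> space P) = A \<inter> {\<omega>. snd \<omega> m \<in> b}"
    using sets.sets_into_space[OF A] by (auto simp: space_P)
  finally show ?thesis .
qed

lemma emeasure_bind_step: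
  assumes A: "A \<in> sets Omega" and b: "b \<in> sets Mstep"
  shows "emeasure (density P (indicator A) \<bind> (\<lambda>\<omega>. K (Xn \<omega> m))) b
    = (\<integral>\<^sup>+\<omega>. indicator A \<omega> * emeasure (K (Xn \<omega> m)) b \<partial>P)"
proof -
  have "emeasure (density P (indicator A) \<bind> (\<lambda>\<omega>. K (Xn \<omega> m))) b
      = (\<integral>\<^sup>+\<omega>. emeasure (K (Xn \<omega> m)) b \<partial>density P (indicator A))"
    using b not_empty by (subst emeasure_bind) (auto simp: space_P)
  also have "\<dots> = (\<integral>\<^sup>+\<omega>. indicator A \<omega> * emeasure (K (Xn \<omega> m)) b \<partial>P)"
    using A b by (subst nn_integral_density) (auto simp: sets_P)
  finally show ?thesis .
qed

text \<open>The defining property of the path measure only speaks about the sets in \<open>time_rects\<close>,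
  an intersection-stable generator of \<open>Mstep\<close>.\<close>

lemma distr_step_eq_bind:
  assumes A: "A \<in> sets (Fn m)"
  shows "distr (density P (indicator A)) Mstep (\<lambda>\<omega>. snd \<omega> m)
    = density P (indicator A) \<bind> (\<lambda>\<omega>. K (Xn \<omega> m))"
proof (rule measure_eqI_generator_eq[OF Int_stable_time_rects time_rects_subset])
  have A_Omega: "A \<in> sets Omega" using A sets_Fn_subset by blast
  show "sets (distr (density P (indicator A)) Mstep (\<lambda>\<omega>. snd \<omega> m))
      = sigma_sets ({0..} \<times> UNIV) time_rects"
    by (simp add: sets_Mstep_time_rects)
  have "sets (density P (indicator A) \<bind> (\<lambda>\<omega>. K (Xn \<omega> m))) = sets Mstep"
    by (rule sets_bind) (use not_empty in \<open>auto simp: sets_K space_P\<close>)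
  then show "sets (density P (indicator A) \<bind> (\<lambda>\<omega>. K (Xn \<omega> m))) = sigma_sets ({0..} \<times> UNIV) time_rects"
    by (simp add: sets_Mstep_time_rects)
  show "range (\<lambda>i::nat. {0..real i} \<times> UNIV) \<subseteq> time_rects" by (auto intro!: time_rectsI)
  show "(\<Union>i::nat. {0..real i} \<times> UNIV) = ({0..} \<times> UNIV :: (real \<times> 'e) set)"
    by (auto simp: real_arch_simple)
  show "emeasure (distr (density P (indicator A)) Mstep (\<lambda>\<omega>. snd \<omega> m)) ({0..real i} \<times> UNIV) \<noteq> \<infinity>" for i
    by (simp add: emeasure_distr_step[OF A_Omega Icc_times_UNIV_in_Mstep] emeasure_eq_measure)
  fix X :: "(real \<times> 'e) set" assume X: "X \<in> time_rects"
  then obtain t B where X': "X = {0..t} \<times> B" "0 \<le> t" "B \<in> sets borel" by (auto simp: time_rects_def)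
  have X_sets: "X \<in> sets Mstep" using X by (rule time_rects_in_Mstep)
  have "A \<inter> {\<omega>. snd \<omega> m \<in> X} = {\<omega> \<in> A. Tn \<omega> (Suc m) \<le> t \<and> Xn \<omega> (Suc m) \<in> B}"
    using sets.sets_into_space[OF A_Omega] X'
    by (auto simp: Tn_def Xn_def space_Omega PiE_def Pi_def mem_Times_iff; fastforce)
  then have "emeasure (distr (density P (indicator A)) Mstep (\<lambda>\<omega>. snd \<omega> m)) X
      = ennreal (\<integral>\<omega>. indicator A \<omega> * Qk K t B (Xn \<omega> m) \<partial>P)"
    using measure_path_step[OF A X'(2,3)]
    by (simp add: emeasure_distr_step[OF A_Omega X_sets] emeasure_eq_measure)
  also have "\<dots> = (\<integral>\<^sup>+\<omega>. ennreal (indicator A \<omega> * Qk K t B (Xn \<omega> m)) \<partial>P)"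
  proof (rule nn_integral_eq_integral[symmetric])
    have "(\<lambda>\<omega>. Qk K t B (Xn \<omega> m)) \<in> borel_measurable Omega"
      unfolding Qk_def measure_def X'(1)[symmetric]
      by (intro borel_measurable_enn2real measurable_emeasure_kernel[OF measurable_K_Xn X_sets])
    then show "integrable P (\<lambda>\<omega>. indicator A \<omega> * Qk K t B (Xn \<omega> m))"
      using A_Omega Qk_le_1 by (intro integrable_bounded[where B=1]) (auto simp: Qk_def indicator_def)
  qed (simp add: Qk_def)
  also have "\<dots> = (\<integral>\<^sup>+\<omega>. indicator A \<omega> * emeasure (K (Xn \<omega> m)) X \<partial>P)"
    using X' by (intro nn_integral_cong)
      (simp add: Qk_def indicator_def ennreal_mult
        finite_measure.emeasure_eq_measure[OF prob_space.finite_measure[OF prob_space_K]])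
  also have "\<dots> = emeasure (density P (indicator A) \<bind> (\<lambda>\<omega>. K (Xn \<omega> m))) X"
    by (rule emeasure_bind_step[OF A_Omega X_sets, symmetric])
  finally show "emeasure (distr (density P (indicator A)) Mstep (\<lambda>\<omega>. snd \<omega> m)) X
      = emeasure (density P (indicator A) \<bind> (\<lambda>\<omega>. K (Xn \<omega> m))) X" .
qed

lemma measurable_history_step[measurable]:
  "(\<lambda>\<omega>. (Yn m \<omega>, snd \<omega> m)) \<in> Omega \<rightarrow>\<^sub>M history_space m \<Otimes>\<^sub>M Mstep"
  by measurable

lemma measurable_history_kernel:
  "(\<lambda>\<omega>. distr (K (Xn \<omega> m)) (history_space m \<Otimes>\<^sub>M Mstep) (\<lambda>p. (Yn m \<omega>, p)))
     \<in> P \<rightarrow>\<^sub>M subprob_algebra (history_space m \<Otimes>\<^sub>M Mstep)"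
  by (rule measurable_distr2[where M=Mstep]) measurable

lemma emeasure_distr_history_step_Times:
  assumes a: "a \<in> sets (history_space m)" and b: "b \<in> sets Mstep"
  shows "emeasure (distr P (history_space m \<Otimes>\<^sub>M Mstep) (\<lambda>\<omega>. (Yn m \<omega>, snd \<omega> m))) (a \<times> b)
    = emeasure (P \<bind> (\<lambda>\<omega>. distr (K (Xn \<omega> m)) (history_space m \<Otimes>\<^sub>M Mstep) (\<lambda>p. (Yn m \<omega>, p)))) (a \<times> b)"
proof -
  define A where "A = Yn m -` a \<inter> space Omega"
  have A: "A \<in> sets (Fn m)" unfolding A_def sets_Fn using a by blast
  have A_Omega: "A \<in> sets Omega" using A sets_Fn_subset by blast
  have "emeasure (distr P (history_space m \<Otimes>\<^sub>M Mstep) (\<lambda>\<omega>. (Yn m \<omega>, snd \<omega> m))) (a \<times> b)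
      = emeasure P (A \<inter> {\<omega>. snd \<omega> m \<in> b})"
    using a b by (subst emeasure_distr) (auto simp: A_def space_P intro!: arg_cong[where f="emeasure P"])
  also have "\<dots> = (\<integral>\<^sup>+\<omega>. indicator A \<omega> * emeasure (K (Xn \<omega> m)) b \<partial>P)"
    by (metis distr_step_eq_bind[OF A] emeasure_distr_step[OF A_Omega b] emeasure_bind_step[OF A_Omega b])
  also have "\<dots> = (\<integral>\<^sup>+\<omega>. emeasure (distr (K (Xn \<omega> m)) (history_space m \<Otimes>\<^sub>M Mstep) (\<lambda>p. (Yn m \<omega>, p))) (a \<times> b) \<partial>P)"
  proof (rule nn_integral_cong)
    fix \<omega> assume \<omega>: "\<omega> \<in> space P"
    have "Yn m \<omega> \<in> space (history_space m)"
      using measurable_space[OF measurable_Yn, of \<omega> m] \<omega> space_P by simp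
    then show "indicator A \<omega> * emeasure (K (Xn \<omega> m)) b
        = emeasure (distr (K (Xn \<omega> m)) (history_space m \<Otimes>\<^sub>M Mstep) (\<lambda>p. (Yn m \<omega>, p))) (a \<times> b)"
      using a b \<omega> sets.sets_into_space[OF b]
      by (subst emeasure_distr)
         (auto simp: A_def space_P indicator_def space_K space_Mstep Int_absorb2)
  qed
  also have "\<dots> = emeasure (P \<bind> (\<lambda>\<omega>. distr (K (Xn \<omega> m)) (history_space m \<Otimes>\<^sub>M Mstep) (\<lambda>p. (Yn m \<omega>, p)))) (a \<times> b)"
    using a b measurable_history_kernel not_empty by (subst emeasure_bind) auto
  finally show ?thesis .
qed

text \<open>The Markov property at step \<open>m\<close>: given the history \<open>Y\<^sub>m\<close>, the next step \<open>(T\<^sub>m\<^sub>+\<^sub>1, X\<^sub>m\<^sub>+\<^sub>1)\<close>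
  has law \<open>K(X\<^sub>m)\<close>.\<close>

lemma distr_history_step_eq_bind:
  "distr P (history_space m \<Otimes>\<^sub>M Mstep) (\<lambda>\<omega>. (Yn m \<omega>, snd \<omega> m))
    = P \<bind> (\<lambda>\<omega>. distr (K (Xn \<omega> m)) (history_space m \<Otimes>\<^sub>M Mstep) (\<lambda>p. (Yn m \<omega>, p)))"
  (is "?L = ?R")
proof (rule measure_eqI_generator_eq[OF Int_stable_pair_measure_generator[of "history_space m" Mstep]])
  let ?G = "{a \<times> b |a b. a \<in> sets (history_space m) \<and> b \<in> sets Mstep}"
  let ?S = "space (history_space m) \<times> space Mstep"
  show "?G \<subseteq> Pow ?S" by (auto dest: sets.sets_into_space)
  show "sets ?L = sigma_sets ?S ?G" by (simp add: sets_pair_measure)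
  have "sets ?R = sets (history_space m \<Otimes>\<^sub>M Mstep)"
    by (rule sets_bind[OF _ not_empty]) simp
  then show "sets ?R = sigma_sets ?S ?G" by (simp add: sets_pair_measure)
  show "range (\<lambda>i::nat. ?S) \<subseteq> ?G" by auto
  show "emeasure ?L ?S \<noteq> \<infinity>" for i :: nat
    by (subst emeasure_distr) (auto simp: space_pair_measure emeasure_eq_measure)
qed (auto intro: emeasure_distr_history_step_Times)

lemma integral_step:
  fixes h :: "_ \<Rightarrow> real"
  assumes h[measurable]: "h \<in> borel_measurable (history_space m \<Otimes>\<^sub>M Mstep)"
    and h_bounds: "\<And>z. z \<in> space (history_space m \<Otimes>\<^sub>M Mstep) \<Longrightarrow> 0 \<le> h z \<and> h z \<le> B"
  shows "(\<integral>\<omega>. h (Yn m \<omega>, snd \<omega> m) \<partial>P) = (\<integral>\<omega>. (\<integral>p. h (Yn m \<omega>, p) \<partial>K (Xn \<omega> m)) \<partial>P)"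
proof -
  have h_bounds': "0 \<le> h (Yn m \<omega>, p) \<and> h (Yn m \<omega>, p) \<le> B"
    if "\<omega> \<in> space Omega" "p \<in> space Mstep" for \<omega> p
    using that measurable_space[OF measurable_Yn, of \<omega> m] by (intro h_bounds) (simp add: space_pair_measure)
  have inner: "(\<integral>\<^sup>+z. ennreal (h z) \<partial>distr (K (Xn \<omega> m)) (history_space m \<Otimes>\<^sub>M Mstep) (\<lambda>p. (Yn m \<omega>, p)))
      = ennreal (\<integral>p. h (Yn m \<omega>, p) \<partial>K (Xn \<omega> m))" if \<omega>: "\<omega> \<in> space Omega" for \<omega>
  proof -
    interpret K: prob_space "K (Xn \<omega> m)" by (rule prob_space_K)
    have [measurable]: "(\<lambda>p. (Yn m \<omega>, p)) \<in> K (Xn \<omega> m) \<rightarrow>\<^sub>M history_space m \<Otimes>\<^sub>M Mstep"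
      using measurable_space[OF measurable_Yn \<omega>] by (simp add: measurable_cong_sets[OF sets_K refl])
    have "(\<integral>\<^sup>+z. ennreal (h z) \<partial>distr (K (Xn \<omega> m)) (history_space m \<Otimes>\<^sub>M Mstep) (\<lambda>p. (Yn m \<omega>, p)))
        = (\<integral>\<^sup>+p. ennreal (h (Yn m \<omega>, p)) \<partial>K (Xn \<omega> m))"
      by (subst nn_integral_distr) auto
    also have "\<dots> = ennreal (\<integral>p. h (Yn m \<omega>, p) \<partial>K (Xn \<omega> m))"
      using h_bounds'[OF \<omega>]
      by (intro nn_integral_eq_integral K.integrable_const_bound[where B=B] AE_I2) (auto simp: space_K space_Mstep)
    finally show ?thesis .
  qed
  have "(\<integral>\<^sup>+\<omega>. ennreal (h (Yn m \<omega>, snd \<omega> m)) \<partial>P)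
      = (\<integral>\<^sup>+z. ennreal (h z) \<partial>distr P (history_space m \<Otimes>\<^sub>M Mstep) (\<lambda>\<omega>. (Yn m \<omega>, snd \<omega> m)))"
    by (subst nn_integral_distr) auto
  also have "\<dots> = (\<integral>\<^sup>+\<omega>. (\<integral>\<^sup>+z. ennreal (h z)
      \<partial>distr (K (Xn \<omega> m)) (history_space m \<Otimes>\<^sub>M Mstep) (\<lambda>p. (Yn m \<omega>, p))) \<partial>P)"
    unfolding distr_history_step_eq_bind by (rule nn_integral_bind[OF _ measurable_history_kernel]) simp
  also have "\<dots> = (\<integral>\<^sup>+\<omega>. ennreal (\<integral>p. h (Yn m \<omega>, p) \<partial>K (Xn \<omega> m)) \<partial>P)"
    by (intro nn_integral_cong) (simp add: inner space_P)
  finally have eq: "(\<integral>\<^sup>+\<omega>. ennreal (h (Yn m \<omega>, snd \<omega> m)) \<partial>P)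
      = (\<integral>\<^sup>+\<omega>. ennreal (\<integral>p. h (Yn m \<omega>, p) \<partial>K (Xn \<omega> m)) \<partial>P)" .
  have "(\<lambda>\<omega>. (\<integral>p. h (Yn m \<omega>, p) \<partial>K (Xn \<omega> m))) \<in> borel_measurable Omega"
    by (rule integral_measurable_subprob_algebra2[where N=Mstep]) measurable
  moreover have "AE \<omega> in P. 0 \<le> (\<integral>p. h (Yn m \<omega>, p) \<partial>K (Xn \<omega> m))"
    using h_bounds' by (intro AE_I2 integral_nonneg_AE) (auto simp: space_P space_K space_Mstep)
  moreover have "AE \<omega> in P. 0 \<le> h (Yn m \<omega>, snd \<omega> m)"
    using h_bounds[OF measurable_space[OF measurable_history_step]] by (intro AE_I2) (simp add: space_P)
  ultimately show ?thesis
    using eq by (simp add: integral_eq_nn_integral measurable_P_iff)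
qed

lemma integral_step_indicator:
  fixes h :: "_ \<Rightarrow> real"
  assumes A: "A \<in> sets (Fn m)"
    and h[measurable]: "h \<in> borel_measurable (history_space m \<Otimes>\<^sub>M Mstep)"
    and h_bounds: "\<And>z. z \<in> space (history_space m \<Otimes>\<^sub>M Mstep) \<Longrightarrow> 0 \<le> h z \<and> h z \<le> B"
  shows "(\<integral>\<omega>. indicator A \<omega> * h (Yn m \<omega>, snd \<omega> m) \<partial>P)
       = (\<integral>\<omega>. indicator A \<omega> * (\<integral>p. h (Yn m \<omega>, p) \<partial>K (Xn \<omega> m)) \<partial>P)"
proof -
  obtain a where a: "a \<in> sets (history_space m)" and A_eq: "A = Yn m -` a \<inter> space Omega"
    using A unfolding sets_Fn by blast
  define h' where "h' z = indicator a (fst z) * h z" for z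
  have "h' \<in> borel_measurable (history_space m \<Otimes>\<^sub>M Mstep)" unfolding h'_def using a by measurable
  then have "(\<integral>\<omega>. h' (Yn m \<omega>, snd \<omega> m) \<partial>P) = (\<integral>\<omega>. (\<integral>p. h' (Yn m \<omega>, p) \<partial>K (Xn \<omega> m)) \<partial>P)"
    by (rule integral_step[where B="max B 0"])
       (auto simp: h'_def indicator_def max.coboundedI1 dest: h_bounds)
  moreover have "(\<integral>\<omega>. indicator A \<omega> * h (Yn m \<omega>, snd \<omega> m) \<partial>P) = (\<integral>\<omega>. h' (Yn m \<omega>, snd \<omega> m) \<partial>P)"
    by (intro Bochner_Integration.integral_cong refl) (auto simp: A_eq h'_def space_P indicator_def)
  moreover have "(\<integral>\<omega>. indicator A \<omega> * (\<integral>p. h (Yn m \<omega>, p) \<partial>K (Xn \<omega> m)) \<partial>P)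
     = (\<integral>\<omega>. (\<integral>p. h' (Yn m \<omega>, p) \<partial>K (Xn \<omega> m)) \<partial>P)"
    by (intro Bochner_Integration.integral_cong refl) (auto simp: A_eq h'_def space_P indicator_def)
  ultimately show ?thesis by simp
qed

lemma AE_start: "AE \<omega> in P. Xn \<omega> 0 = x0"
proof -
  have "measure P {\<omega> \<in> space Omega. Xn \<omega> 0 = x0} = 1" using path_measure by (simp add: path_measure_def)
  moreover have "{\<omega> \<in> space P. Xn \<omega> 0 = x0} \<in> sets P" by (simp add: sets_P space_P)
  ultimately show ?thesis using prob_Collect_eq_1 by (simp add: space_P)
qed

lemma AE_sojourn_pos: "AE \<omega> in P. \<forall>j. 0 < Tn \<omega> (Suc j)"
proof (subst AE_all_countable, intro allI)
  fix j
  have "measure P {\<omega> \<in> space Omega. Tn \<omega> (Suc j) \<le> 0 \<and> Xn \<omega> (Suc j) \<in> UNIV}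
          = (\<integral>\<omega>. indicator (space Omega) \<omega> * Qk K 0 UNIV (Xn \<omega> j) \<partial>P)"
    by (rule measure_path_step[OF space_Omega_in_Fn]) auto
  then have "measure P {\<omega> \<in> space P. Tn \<omega> (Suc j) \<le> 0} = 0" by (simp add: Qk_time_zero space_P)
  moreover have "{\<omega> \<in> space P. Tn \<omega> (Suc j) \<le> 0} \<in> sets P" by (simp add: sets_P space_P)
  ultimately have "AE \<omega> in P. \<not> Tn \<omega> (Suc j) \<le> 0" using prob_Collect_eq_0 by simp
  then show "AE \<omega> in P. 0 < Tn \<omega> (Suc j)" by (simp add: not_le)
qed

end

section \<open>The operator \<open>G\<close> and its iterates\<close>

definition bdd_measurable :: "(real \<Rightarrow> 'e::polish_space \<Rightarrow> real) \<Rightarrow> bool" where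
  "bdd_measurable u \<longleftrightarrow>
     (\<lambda>(s, x). u s x) \<in> borel_measurable (borel \<Otimes>\<^sub>M borel) \<and> (\<exists>B. \<forall>s x. \<bar>u s x\<bar> \<le> B)"

lemma bdd_measurable_measurable: "bdd_measurable u \<Longrightarrow> (\<lambda>(s, x). u s x) \<in> borel_measurable (borel \<Otimes>\<^sub>M borel)"
  by (simp add: bdd_measurable_def)

lemma measurable_bdd_measurable_comp:
  assumes "bdd_measurable U" and "a \<in> borel_measurable M" and "b \<in> M \<rightarrow>\<^sub>M borel"
  shows "(\<lambda>z. U (a z) (b z)) \<in> borel_measurable M"
proof -
  have "(\<lambda>z. (a z, b z)) \<in> M \<rightarrow>\<^sub>M borel \<Otimes>\<^sub>M borel" using assms by measurable
  from measurable_compose[OF this bdd_measurable_measurable[OF assms(1)]] show ?thesis by simp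
qed

lemma bdd_measurable_add_const: "bdd_measurable u \<Longrightarrow> bdd_measurable (\<lambda>s x. u s x + \<eta>)"
proof -
  assume u: "bdd_measurable u"
  then obtain B where B: "\<And>s x. \<bar>u s x\<bar> \<le> B" by (auto simp: bdd_measurable_def)
  have "(\<lambda>(s, x). u s x + \<eta>) \<in> borel_measurable (borel \<Otimes>\<^sub>M borel)"
    using bdd_measurable_measurable[OF u] by (simp add: case_prod_beta')
  moreover have "\<bar>u s x + \<eta>\<bar> \<le> B + \<bar>\<eta>\<bar>" for s x using B[of s x] by linarith
  ultimately show ?thesis unfolding bdd_measurable_def by blast
qed

lemma supnorm_ge: "bounded (range f) \<Longrightarrow> \<bar>f x\<bar> \<le> supnorm f"
  unfolding supnorm_def by (rule cSUP_upper) (auto simp: bounded_iff bdd_above_def)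

lemma supnorm_nonneg: "bounded (range f) \<Longrightarrow> 0 \<le> supnorm f"
  using supnorm_ge[of f undefined] by linarith

context semi_markov
begin

definition mean_sojourn :: "real \<Rightarrow> 'e \<Rightarrow> real" where
  "mean_sojourn s x = (LINT t:{0..s}|lborel. 1 - Qk K t UNIV x)"

lemma mean_sojourn_eq: "mean_sojourn s x = (\<integral>p. max 0 (min (fst p) s) \<partial>K x)"
  unfolding mean_sojourn_def Qk_def by (rule integral_survival_eq_integral_min[OF prob_space_K sets_K])

lemma measurable_mean_sojourn[measurable]:
  "(\<lambda>(s, x). mean_sojourn s x) \<in> borel_measurable (borel \<Otimes>\<^sub>M borel)"
proof -
  have "(\<lambda>sx. \<integral>p. max 0 (min (fst p) (fst sx)) \<partial>K (snd sx)) \<in> borel_measurable (borel \<Otimes>\<^sub>M borel)"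
    by (rule integral_measurable_subprob_algebra2[where N=Mstep]) measurable
  then show ?thesis by (simp add: mean_sojourn_eq case_prod_beta')
qed

lemma mean_sojourn_nonneg: "0 \<le> mean_sojourn s x"
  unfolding mean_sojourn_eq by (rule integral_nonneg_AE) auto

lemma mean_sojourn_time_zero: "mean_sojourn 0 x = 0"
proof -
  have "(\<lambda>p::real \<times> 'e. max 0 (min (fst p) 0)) = (\<lambda>_. 0)" by (auto simp: fun_eq_iff)
  then show ?thesis unfolding mean_sojourn_eq by simp
qed

lemma measurable_shifted_integrand:
  assumes "bdd_measurable u"
  shows "(\<lambda>(sx, p). indicator ({0..fst sx} \<times> UNIV) p * u (fst sx - fst p) (snd p))
          \<in> borel_measurable ((borel \<Otimes>\<^sub>M borel) \<Otimes>\<^sub>M Mstep)"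
proof -
  have "(\<lambda>z. u (fst (fst z) - fst (snd z)) (snd (snd z))) \<in> borel_measurable ((borel \<Otimes>\<^sub>M borel) \<Otimes>\<^sub>M Mstep)"
    by (rule measurable_bdd_measurable_comp[OF assms]) measurable
  moreover have "(\<lambda>z. indicator ({0..fst (fst z)} \<times> UNIV) (snd z) :: real)
      \<in> borel_measurable ((borel \<Otimes>\<^sub>M borel) \<Otimes>\<^sub>M Mstep)"
    by (simp add: indicator_def mem_Times_iff) measurable
  ultimately show ?thesis unfolding case_prod_beta' by (rule borel_measurable_times[rotated])
qed

lemma measurable_shifted_integrand_K:
  "bdd_measurable u \<Longrightarrow>
    (\<lambda>p. indicator ({0..s} \<times> UNIV) p * u (s - fst p) (snd p)) \<in> borel_measurable (K x)"
  using measurable_compose[of "\<lambda>p. ((s, x), p)" "K x", OF _ measurable_shifted_integrand] by simp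

lemma integrable_shifted:
  assumes u: "bdd_measurable u"
  shows "integrable (K x) (\<lambda>p. indicator ({0..s} \<times> UNIV) p * u (s - fst p) (snd p))"
proof -
  interpret prob_space "K x" by (rule prob_space_K)
  obtain B where B: "\<And>s x. \<bar>u s x\<bar> \<le> B" using u by (auto simp: bdd_measurable_def)
  then have "0 \<le> B" by (meson abs_ge_zero order_trans)
  with B show ?thesis
    by (intro integrable_const_bound[where B=B] AE_I2 measurable_shifted_integrand_K[OF u])
       (simp add: indicator_def)
qed

end

locale stopping_problem = semi_markov K
  for K :: "'e::polish_space \<Rightarrow> (real \<times> 'e) measure" +
  fixes c g :: "'e \<Rightarrow> real" and T :: real
  assumes c_measurable[measurable]: "c \<in> borel_measurable borel" and c_bdd: "bounded (range c)"
    and c_nonneg: "\<And>x. 0 \<le> c x"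
    and g_measurable[measurable]: "g \<in> borel_measurable borel" and g_bdd: "bounded (range g)"
    and g_nonneg: "\<And>x. 0 \<le> g x"
    and T_nonneg: "0 \<le> T"
    and beta_less_1: "betaQ K T < 1"
begin

abbreviation "\<beta> \<equiv> betaQ K T"
abbreviation "cmax \<equiv> supnorm c"
abbreviation "gmax \<equiv> supnorm g"

lemma c_le: "c x \<le> cmax"
  using supnorm_ge[OF c_bdd, of x] c_nonneg[of x] by simp

lemma g_le: "g x \<le> gmax"
  using supnorm_ge[OF g_bdd, of x] g_nonneg[of x] by simp

lemma cmax_nonneg: "0 \<le> cmax"
  using supnorm_nonneg[OF c_bdd] .

lemma gmax_nonneg: "0 \<le> gmax"
  using supnorm_nonneg[OF g_bdd] .

lemma Qk_le_beta: "t \<le> T \<Longrightarrow> Qk K t UNIV x \<le> \<beta>"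
proof -
  assume "t \<le> T"
  then have "Qk K t UNIV x \<le> Qk K T UNIV x" by (intro Qk_mono) auto
  also have "\<dots> \<le> \<beta>" unfolding betaQ_def
    by (rule cSUP_upper) (auto intro: bdd_aboveI[where M=1] Qk_le_1)
  finally show ?thesis .
qed

lemma beta_nonneg: "0 \<le> \<beta>"
  using Qk_le_beta[OF order.refl, of undefined] by (simp add: Qk_def order_trans[OF measure_nonneg])

definition cont_cost :: "(real \<Rightarrow> 'e \<Rightarrow> real) \<Rightarrow> real \<Rightarrow> 'e \<Rightarrow> real" where
  "cont_cost u s x = c x * mean_sojourn s x + (\<integral>p. indicator ({0..s} \<times> UNIV) p * u (s - fst p) (snd p) \<partial>K x)"

lemma Gop_eq_min_cont_cost: "Gop K c g u s x = min (cont_cost u s x) (g x)"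
  by (simp add: Gop_def cont_cost_def mean_sojourn_def)

lemma measurable_cont_cost:
  "bdd_measurable u \<Longrightarrow> (\<lambda>(s, x). cont_cost u s x) \<in> borel_measurable (borel \<Otimes>\<^sub>M borel)"
proof -
  assume u: "bdd_measurable u"
  have "(\<lambda>sx. \<integral>p. indicator ({0..fst sx} \<times> UNIV) p * u (fst sx - fst p) (snd p) \<partial>K (snd sx))
      \<in> borel_measurable (borel \<Otimes>\<^sub>M borel)"
    by (rule integral_measurable_subprob_algebra2[where N=Mstep])
       (use measurable_shifted_integrand[OF u] in \<open>simp_all add: case_prod_beta'\<close>)
  then show ?thesis unfolding cont_cost_def case_prod_beta' by measurable
qed

lemma cont_cost_diff:
  assumes "bdd_measurable u" "bdd_measurable v"
  shows "cont_cost u s x - cont_cost v s x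
    = (\<integral>p. indicator ({0..s} \<times> UNIV) p * (u (s - fst p) (snd p) - v (s - fst p) (snd p)) \<partial>K x)"
  unfolding cont_cost_def using integrable_shifted[OF assms(1)] integrable_shifted[OF assms(2)]
  by (simp add: right_diff_distrib)

lemma cont_cost_mono:
  assumes "bdd_measurable u" "bdd_measurable v" and "\<And>r y. 0 \<le> r \<Longrightarrow> r \<le> s \<Longrightarrow> u r y \<le> v r y"
  shows "cont_cost u s x \<le> cont_cost v s x"
proof -
  have "0 \<le> cont_cost v s x - cont_cost u s x"
    unfolding cont_cost_diff[OF assms(2,1)]
    by (rule integral_nonneg_AE) (use assms(3) in \<open>auto simp: indicator_def mem_Times_iff\<close>)
  then show ?thesis by simp
qed

text \<open>The continuation part of \<open>G\<close> only sees \<open>Q(s, \<cdot> | x)\<close>, of mass at most \<open>\<beta>\<close> when \<open>s \<le> T\<close>.\<close>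

lemma cont_cost_contraction:
  assumes "bdd_measurable u" "bdd_measurable v" and s: "0 \<le> s" "s \<le> T"
    and le: "\<And>r y. 0 \<le> r \<Longrightarrow> r \<le> s \<Longrightarrow> \<bar>u r y - v r y\<bar> \<le> D"
  shows "\<bar>cont_cost u s x - cont_cost v s x\<bar> \<le> \<beta> * D"
proof -
  interpret prob_space "K x" by (rule prob_space_K)
  have "0 \<le> D" using le[of s undefined] s by linarith
  have "\<bar>cont_cost u s x - cont_cost v s x\<bar> \<le> (\<integral>p. indicator ({0..s} \<times> UNIV) p * D \<partial>K x)"
    unfolding cont_cost_diff[OF assms(1,2)]
  proof (rule order.trans[OF integral_abs_bound integral_mono])
    show "integrable (K x)
      (\<lambda>p. \<bar>indicator ({0..s} \<times> UNIV) p * (u (s - fst p) (snd p) - v (s - fst p) (snd p))\<bar>)"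
      using integrable_shifted[OF assms(1)] integrable_shifted[OF assms(2)]
      by (simp add: right_diff_distrib)
    show "integrable (K x) (\<lambda>p. indicator ({0..s} \<times> UNIV) p * D)"
      using Icc_times_UNIV_in_Mstep[of s]
      by (intro integrable_mult_left integrable_real_indicator) (auto simp: sets_K emeasure_eq_measure)
    show "\<bar>indicator ({0..s} \<times> UNIV) p * (u (s - fst p) (snd p) - v (s - fst p) (snd p))\<bar>
        \<le> indicator ({0..s} \<times> UNIV) p * D" for p
      using le \<open>0 \<le> D\<close> by (auto simp: indicator_def mem_Times_iff)
  qed
  also have "\<dots> = D * Qk K s UNIV x" by (rule integral_indicator_time_le)
  also have "\<dots> \<le> \<beta> * D"
    using \<open>0 \<le> D\<close> Qk_le_beta[OF s(2), of x] by (simp add: mult.commute mult_left_mono)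
  finally show ?thesis .
qed

lemma cont_cost_add_const:
  assumes u: "bdd_measurable u"
  shows "cont_cost (\<lambda>s x. u s x + \<eta>) s x = cont_cost u s x + \<eta> * Qk K s UNIV x"
proof -
  interpret prob_space "K x" by (rule prob_space_K)
  have "integrable (K x) (\<lambda>p. indicator ({0..s} \<times> UNIV) p * \<eta>)"
    using Icc_times_UNIV_in_Mstep[of s]
    by (intro integrable_mult_left integrable_real_indicator) (auto simp: sets_K emeasure_eq_measure)
  then have "(\<integral>p. indicator ({0..s} \<times> UNIV) p * (u (s - fst p) (snd p) + \<eta>) \<partial>K x)
      = (\<integral>p. indicator ({0..s} \<times> UNIV) p * u (s - fst p) (snd p) \<partial>K x) + \<eta> * Qk K s UNIV x"
    using integrable_shifted[OF u] integral_indicator_time_le[where s=s and D=\<eta> and x=x] by (simp add: distrib_left)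
  then show ?thesis unfolding cont_cost_def by simp
qed

lemma cont_cost_eq_integral:
  assumes "bdd_measurable U"
  shows "cont_cost U r x
    = (\<integral>p. c x * max 0 (min (fst p) r) + indicator ({0..r} \<times> UNIV) p * U (r - fst p) (snd p) \<partial>K x)"
    and "integrable (K x)
      (\<lambda>p. c x * max 0 (min (fst p) r) + indicator ({0..r} \<times> UNIV) p * U (r - fst p) (snd p))"
proof -
  interpret prob_space "K x" by (rule prob_space_K)
  have "integrable (K x) (\<lambda>p. c x * max 0 (min (fst p) r))"
    by (intro integrable_const_bound[where B="\<bar>c x\<bar> * \<bar>r\<bar>"] AE_I2)
       (auto simp: abs_mult intro!: mult_left_mono)
  then show "integrable (K x)
      (\<lambda>p. c x * max 0 (min (fst p) r) + indicator ({0..r} \<times> UNIV) p * U (r - fst p) (snd p))"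
    and "cont_cost U r x
      = (\<integral>p. c x * max 0 (min (fst p) r) + indicator ({0..r} \<times> UNIV) p * U (r - fst p) (snd p) \<partial>K x)"
    using integrable_shifted[OF assms] by (auto simp: cont_cost_def mean_sojourn_eq)
qed

abbreviation "V n \<equiv> Vn K c g n"

lemma V_0: "V 0 s x = 0"
  by (simp add: Vn_def)

lemma V_Suc: "V (Suc n) s x = min (cont_cost (V n) s x) (g x)"
  by (simp add: Vn_def Gop_eq_min_cont_cost)

lemma Gop_V: "Gop K c g (V n) = V (Suc n)"
  by (simp add: Vn_def)

lemma V_bdd_measurable_bounds: "bdd_measurable (V n) \<and> (\<forall>s x. 0 \<le> V n s x \<and> V n s x \<le> g x)"
proof (induct n)
  case 0
  show ?case using g_nonneg by (auto simp: V_0 bdd_measurable_def)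
next
  case (Suc n)
  then have V: "bdd_measurable (V n)" and V_nonneg: "\<And>s x. 0 \<le> V n s x" by auto
  have cont_nonneg: "0 \<le> cont_cost (V n) s x" for s x
    unfolding cont_cost_def using c_nonneg mean_sojourn_nonneg V_nonneg
    by (intro add_nonneg_nonneg mult_nonneg_nonneg integral_nonneg_AE) (auto simp: indicator_def)
  have "(\<lambda>(s, x). V (Suc n) s x) \<in> borel_measurable (borel \<Otimes>\<^sub>M borel)"
    using measurable_cont_cost[OF V] unfolding V_Suc by (simp add: case_prod_beta') measurable
  moreover have "\<bar>V (Suc n) s x\<bar> \<le> gmax" for s x
    unfolding V_Suc using cont_nonneg[of s x] g_le[of x] g_nonneg[of x] by auto
  ultimately show ?case using cont_nonneg g_nonneg unfolding bdd_measurable_def V_Suc by auto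
qed

lemma V_bdd_measurable: "bdd_measurable (V n)"
  using V_bdd_measurable_bounds by blast

lemma V_nonneg: "0 \<le> V n s x"
  using V_bdd_measurable_bounds by blast

lemma V_le_g: "V n s x \<le> g x"
  using V_bdd_measurable_bounds by blast

lemma V_le_gmax: "V n s x \<le> gmax"
  using V_le_g g_le order_trans by blast

lemma V_time_zero: "V n 0 x = 0"
proof (cases n)
  case 0 then show ?thesis by (simp add: V_0)
next
  case (Suc m)
  have "AE p in K x. p \<notin> {0} \<times> UNIV"
    using emeasure_K_time_zero[of x]
    by (intro AE_I[of _ _ "{0} \<times> UNIV"]) (auto simp: sets_K Icc_times_UNIV_in_Mstep[of 0, simplified])
  then have "AE p in K x. indicator ({0..0} \<times> UNIV) p * V m (0 - fst p) (snd p) = (0::real)"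
    by eventually_elim (auto simp: indicator_def)
  then have "(\<integral>p. indicator ({0..0} \<times> UNIV) p * V m (0 - fst p) (snd p) \<partial>K x) = 0"
    using measurable_shifted_integrand_K[OF V_bdd_measurable, of 0 m x]
    by (subst integral_cong_AE[where g="\<lambda>_. 0"]) auto
  then show ?thesis using Suc g_nonneg[of x] by (simp add: V_Suc cont_cost_def mean_sojourn_time_zero)
qed

lemma V_le_V_Suc: "V n s x \<le> V (Suc n) s x"
proof (induct n arbitrary: s x)
  case 0 then show ?case by (simp add: V_0 V_nonneg)
next
  case (Suc n)
  have "cont_cost (V n) s x \<le> cont_cost (V (Suc n)) s x"
    by (rule cont_cost_mono[OF V_bdd_measurable V_bdd_measurable Suc])
  then show ?case by (simp add: V_Suc[of "Suc n"] V_Suc[of n] del: Vn_def)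
qed

lemma V_mono: "n \<le> m \<Longrightarrow> V n s x \<le> V m s x"
  by (induct m rule: dec_induct) (auto intro: order_trans V_le_V_Suc)

lemma V_Suc_diff_le: "0 \<le> s \<Longrightarrow> s \<le> T \<Longrightarrow> \<bar>V (Suc n) s x - V n s x\<bar> \<le> \<beta> ^ n * gmax"
proof (induct n arbitrary: s x)
  case 0 then show ?case using V_nonneg V_le_gmax by (simp add: V_0)
next
  case (Suc n)
  have "\<bar>cont_cost (V (Suc n)) s x - cont_cost (V n) s x\<bar> \<le> \<beta> * (\<beta> ^ n * gmax)"
    by (rule cont_cost_contraction[OF V_bdd_measurable V_bdd_measurable Suc.prems])
       (use Suc.hyps Suc.prems in auto)
  then show ?case by (simp add: V_Suc[of "Suc n"] V_Suc[of n])
qed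

lemma V_diff_le_tail:
  assumes "N \<le> m" "0 \<le> s" "s \<le> T"
  shows "\<bar>V m s x - V N s x\<bar> \<le> \<beta> ^ N * gmax / (1 - \<beta>)"
proof -
  have "\<bar>V m s x - V N s x\<bar> \<le> (\<Sum>j\<in>{N..<m}. \<beta> ^ j * gmax)"
    using assms(1)
  proof (induct m rule: dec_induct)
    case (step m)
    have "\<bar>V (Suc m) s x - V N s x\<bar> \<le> \<bar>V (Suc m) s x - V m s x\<bar> + \<bar>V m s x - V N s x\<bar>" by linarith
    also have "\<dots> \<le> \<beta> ^ m * gmax + (\<Sum>j\<in>{N..<m}. \<beta> ^ j * gmax)"
      using V_Suc_diff_le[OF assms(2,3), of m x] step(3) by linarith
    finally show ?case using step(1) by (simp add: add.commute)
  qed simp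
  also have "(\<Sum>j\<in>{N..<m}. \<beta> ^ j * gmax) = \<beta> ^ N * gmax * (\<Sum>j<m - N. \<beta> ^ j)"
  proof -
    have "(\<Sum>j\<in>{N..<m}. \<beta> ^ j * gmax) = (\<Sum>j<m - N. \<beta> ^ (N + j) * gmax)"
      using assms(1) by (intro sum.reindex_bij_witness[where i="\<lambda>j. N + j" and j="\<lambda>j. j - N"]) auto
    then show ?thesis by (simp add: power_add sum_distrib_left mult_ac)
  qed
  also have "\<dots> \<le> \<beta> ^ N * gmax * (1 / (1 - \<beta>))"
  proof (rule mult_left_mono)
    have "(\<Sum>j<m - N. \<beta> ^ j) = (1 - \<beta> ^ (m - N)) / (1 - \<beta>)"
      using beta_less_1 by (simp add: sum_gp_strict)
    also have "\<dots> \<le> 1 / (1 - \<beta>)" using beta_less_1 beta_nonneg by (simp add: divide_right_mono)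
    finally show "(\<Sum>j<m - N. \<beta> ^ j) \<le> 1 / (1 - \<beta>)" .
  qed (use beta_nonneg gmax_nonneg in simp)
  finally show ?thesis by simp
qed

end

section \<open>Costs along a path\<close>

lemma Xt_eq_Xn:
  assumes \<omega>: "\<omega> \<in> space Omega" and t: "Sn \<omega> m \<le> t" "t < Sn \<omega> (Suc m)"
  shows "Xt \<omega> t = Xn \<omega> m"
proof -
  have "(LEAST n. t < Sn \<omega> (Suc n)) = m"
  proof (rule Least_equality)
    fix n assume n: "t < Sn \<omega> (Suc n)"
    show "m \<le> n"
    proof (rule ccontr)
      assume "\<not> m \<le> n"
      then have "Sn \<omega> (Suc n) \<le> Sn \<omega> m" using Sn_mono[OF \<omega>] by simp
      then show False using n t(1) by linarith
    qed
  qed (rule t(2))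
  then show ?thesis by (simp add: Xt_def)
qed

lemma measurable_Xt[measurable]: "(\<lambda>z. Xt (fst z) (snd z)) \<in> Omega \<Otimes>\<^sub>M borel \<rightarrow>\<^sub>M borel"
proof -
  have "(\<lambda>z. LEAST n. snd z < Sn (fst z) (Suc n)) \<in> Omega \<Otimes>\<^sub>M borel \<rightarrow>\<^sub>M count_space UNIV"
    by measurable
  then have "(\<lambda>z. Xn (fst z) (LEAST n. snd z < Sn (fst z) (Suc n))) \<in> Omega \<Otimes>\<^sub>M borel \<rightarrow>\<^sub>M borel"
    by (rule measurable_compose_countable[rotated]) measurable
  then show ?thesis by (simp add: Xt_def)
qed

lemma measurable_Xt_time[measurable]: "\<omega> \<in> space Omega \<Longrightarrow> Xt \<omega> \<in> borel \<rightarrow>\<^sub>M borel"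
proof -
  assume "\<omega> \<in> space Omega"
  then have "(\<lambda>t. (\<omega>, t)) \<in> borel \<rightarrow>\<^sub>M Omega \<Otimes>\<^sub>M borel" by simp
  from measurable_compose[OF this measurable_Xt] show ?thesis by simp
qed

lemma measurable_set_integral_Icc:
  fixes f :: "'e::polish_space omega \<Rightarrow> real \<Rightarrow> real"
  assumes [measurable]: "a \<in> borel_measurable Omega"
    and [measurable]: "(\<lambda>z. f (fst z) (snd z)) \<in> borel_measurable (Omega \<Otimes>\<^sub>M borel)"
  shows "(\<lambda>\<omega>. LINT t:{0..a \<omega>}|lborel. f \<omega> t) \<in> borel_measurable Omega"
proof -
  have "(\<lambda>z. indicator {0..a (fst z)} (snd z) * f (fst z) (snd z)) \<in> borel_measurable (Omega \<Otimes>\<^sub>M borel)"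
    by (simp add: indicator_def) measurable
  then have "(\<lambda>(\<omega>, t). indicator {0..a \<omega>} t *\<^sub>R f \<omega> t) \<in> borel_measurable (Omega \<Otimes>\<^sub>M lborel)"
    by (simp add: case_prod_beta' measurable_cong_sets[OF sets_pair_measure_cong[OF refl sets_lborel] refl])
  then show ?thesis
    unfolding set_lebesgue_integral_def by (rule lborel.borel_measurable_lebesgue_integral)
qed

lemma stopping_time_gt_Fn:
  assumes \<sigma>: "is_stopping_time \<sigma>"
  shows "{\<omega> \<in> space Omega. enat m < \<sigma> \<omega>} \<in> sets (Fn m)"
proof -
  have "enat m < e \<longleftrightarrow> \<not> (\<exists>j\<le>m. e = enat j)" for e
    by (cases e) auto
  then have "{\<omega> \<in> space Omega. enat m < \<sigma> \<omega>}
      = space Omega - (\<Union>j\<in>{..m}. {\<omega> \<in> space Omega. \<sigma> \<omega> = enat j})"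
    by auto
  also have "\<dots> \<in> sets (Fn m)"
    using \<sigma> sets_Fn_mono space_Omega_in_Fn
    by (intro sets.Diff sets.finite_UN) (auto simp: is_stopping_time_def)
  finally show ?thesis .
qed

lemma measurable_stopping_time:
  assumes \<sigma>: "is_stopping_time \<sigma>"
  shows "\<sigma> \<in> Omega \<rightarrow>\<^sub>M count_space UNIV"
proof -
  have eq: "{\<omega> \<in> space Omega. \<sigma> \<omega> = enat n} \<in> sets Omega" for n
    using \<sigma> sets_Fn_subset by (auto simp: is_stopping_time_def)
  have "\<sigma> -` {a} \<inter> space Omega \<in> sets Omega" for a
  proof (cases a)
    case (enat n)
    then have "\<sigma> -` {a} \<inter> space Omega = {\<omega> \<in> space Omega. \<sigma> \<omega> = enat n}" by auto
    then show ?thesis using eq by simp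
  next
    case infinity
    have "\<sigma> \<omega> = \<infinity> \<longleftrightarrow> (\<forall>n. \<sigma> \<omega> \<noteq> enat n)" for \<omega> by (cases "\<sigma> \<omega>") auto
    then have "\<sigma> -` {a} \<inter> space Omega = space Omega - (\<Union>n. {\<omega> \<in> space Omega. \<sigma> \<omega> = enat n})"
      using infinity by auto
    then show ?thesis using eq by auto
  qed
  then show ?thesis by (subst measurable_count_space_eq_countable) auto
qed

lemma measurable_stopping_time_pred:
  "is_stopping_time \<sigma> \<Longrightarrow> (\<lambda>\<omega>. F (\<sigma> \<omega>)) \<in> Omega \<rightarrow>\<^sub>M count_space UNIV"
  by (rule measurable_compose[OF measurable_stopping_time measurable_count_space])

lemma measurable_Stau:
  assumes \<sigma>: "is_stopping_time \<sigma>"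
  shows "Stau \<sigma> \<in> borel_measurable Omega"
proof -
  have "(\<lambda>\<omega>. Sn \<omega> (the_enat (\<sigma> \<omega>))) \<in> borel_measurable Omega"
    by (rule measurable_compose_countable[OF _ measurable_stopping_time_pred[OF \<sigma>]]) simp
  then have "(\<lambda>\<omega>. if \<sigma> \<omega> = \<infinity> then Sinf \<omega> else ereal (Sn \<omega> (the_enat (\<sigma> \<omega>)))) \<in> borel_measurable Omega"
    using measurable_stopping_time_pred[OF \<sigma>, of "\<lambda>e. e = \<infinity>"] unfolding Sinf_def by measurable
  moreover have "Stau \<sigma> = (\<lambda>\<omega>. if \<sigma> \<omega> = \<infinity> then Sinf \<omega> else ereal (Sn \<omega> (the_enat (\<sigma> \<omega>))))"
    by (auto simp: fun_eq_iff Stau_def split: enat.split)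
  ultimately show ?thesis by simp
qed

lemma Sinf_ge: "ereal (Sn \<omega> n) \<le> Sinf \<omega>"
  unfolding Sinf_def by (rule SUP_upper) simp

lemma Stau_nonneg: "\<omega> \<in> space Omega \<Longrightarrow> 0 \<le> Stau \<sigma> \<omega>"
  using Sn_nonneg[of \<omega>] order_trans[OF _ Sinf_ge[of \<omega> 0]] by (cases "\<sigma> \<omega>") (auto simp: Stau_def)

context stopping_problem
begin

definition run_cost :: "'e omega \<Rightarrow> real \<Rightarrow> real" where
  "run_cost \<omega> a = (LINT t:{0..a}|lborel. c (Xt \<omega> t))"

definition sojourn_cost :: "real \<Rightarrow> 'e omega \<Rightarrow> nat \<Rightarrow> real" where
  "sojourn_cost s \<omega> j = c (Xn \<omega> j) * (min (Sn \<omega> (Suc j)) s - min (Sn \<omega> j) s)"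

lemma Rcost_eq_run_cost:
  "Rcost c g s \<sigma> \<omega> = (if Stau \<sigma> \<omega> < ereal s
     then run_cost \<omega> (real_of_ereal (Stau \<sigma> \<omega>)) + g (Xt \<omega> (real_of_ereal (Stau \<sigma> \<omega>)))
     else run_cost \<omega> s)"
  by (simp add: Rcost_def run_cost_def)

lemma set_integrable_c_Xt:
  assumes "\<omega> \<in> space Omega" and "bounded A" "A \<in> sets borel"
  shows "set_integrable lborel A (\<lambda>t. c (Xt \<omega> t))"
  unfolding set_integrable_def
  by (rule integrableI_bounded_set_indicator[where B=cmax])
     (use assms emeasure_bounded_finite c_le c_nonneg in \<open>auto simp: measurable_cong_sets[OF sets_lborel refl]\<close>)

lemma run_cost_split:
  assumes \<omega>: "\<omega> \<in> space Omega" and "0 \<le> a" "a \<le> b"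
  shows "run_cost \<omega> b = run_cost \<omega> a + (LINT t:{a<..b}|lborel. c (Xt \<omega> t))"
proof -
  have "{0..b} = {0..a} \<union> {a<..b}" using assms by auto
  then show ?thesis
    unfolding run_cost_def by (simp only:) (rule set_integral_Un; auto intro!: set_integrable_c_Xt[OF \<omega>])
qed

lemma integral_Ioc_c_Xt_bounds:
  assumes \<omega>: "\<omega> \<in> space Omega" and "a \<le> b"
  shows "0 \<le> (LINT t:{a<..b}|lborel. c (Xt \<omega> t))"
    and "(LINT t:{a<..b}|lborel. c (Xt \<omega> t)) \<le> cmax * (b - a)"
proof -
  show "0 \<le> (LINT t:{a<..b}|lborel. c (Xt \<omega> t))"
    unfolding set_lebesgue_integral_def by (rule integral_nonneg_AE) (auto simp: c_nonneg)
  have "(LINT t:{a<..b}|lborel. c (Xt \<omega> t)) \<le> (LINT t:{a<..b}|lborel. cmax)"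
    by (rule set_integral_mono[OF set_integrable_c_Xt[OF \<omega>]])
       (auto simp: c_le set_integrable_def
         intro!: integrable_mult_left integrable_real_indicator emeasure_bounded_finite)
  also have "\<dots> = cmax * (b - a)" using assms by (simp add: set_integral_const)
  finally show "(LINT t:{a<..b}|lborel. c (Xt \<omega> t)) \<le> cmax * (b - a)" .
qed

lemma run_cost_nonneg: "0 \<le> run_cost \<omega> a"
  unfolding run_cost_def set_lebesgue_integral_def by (rule integral_nonneg_AE) (auto simp: c_nonneg)

lemma run_cost_0: "run_cost \<omega> 0 = 0"
proof -
  have "AE t in lborel. indicator {0..0::real} t *\<^sub>R c (Xt \<omega> t) = 0"
    using AE_lborel_singleton[of 0] by eventually_elim (auto simp: indicator_def)
  then show ?thesis by (simp add: run_cost_def set_lebesgue_integral_def integral_eq_zero_AE)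
qed

lemma run_cost_mono:
  assumes "\<omega> \<in> space Omega" "0 \<le> a" "a \<le> b"
  shows "run_cost \<omega> a \<le> run_cost \<omega> b" and "run_cost \<omega> b \<le> run_cost \<omega> a + cmax * (b - a)"
  using run_cost_split[OF assms] integral_Ioc_c_Xt_bounds[OF assms(1,3)] by auto

lemma run_cost_le: "\<omega> \<in> space Omega \<Longrightarrow> 0 \<le> a \<Longrightarrow> run_cost \<omega> a \<le> cmax * a"
  using run_cost_mono(2)[of \<omega> 0 a] by (simp add: run_cost_0)

lemma run_cost_within_T:
  assumes "\<omega> \<in> space Omega" "0 \<le> a" "a \<le> b" "b \<le> T"
  shows "run_cost \<omega> a \<le> run_cost \<omega> b" "run_cost \<omega> b \<le> run_cost \<omega> a + cmax * T"
proof -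
  show "run_cost \<omega> a \<le> run_cost \<omega> b" using run_cost_mono(1) assms by simp
  have "cmax * (b - a) \<le> cmax * T" using assms cmax_nonneg by (intro mult_left_mono) auto
  then show "run_cost \<omega> b \<le> run_cost \<omega> a + cmax * T" using run_cost_mono(2)[OF assms(1-3)] by simp
qed

text \<open>Between jumps the path is constant, so the running cost is a sum over sojourns.\<close>

lemma run_cost_eq_sum_sojourn_cost:
  assumes \<omega>: "\<omega> \<in> space Omega" and s: "0 \<le> s"
  shows "run_cost \<omega> (min (Sn \<omega> m) s) = (\<Sum>j<m. sojourn_cost s \<omega> j)"
proof (induct m)
  case 0 then show ?case using s by (simp add: run_cost_0 Sn_conv_sum)
next
  case (Suc m)
  define a where "a = min (Sn \<omega> m) s"
  define b where "b = min (Sn \<omega> (Suc m)) s"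
  have "0 \<le> a" using Sn_nonneg[OF \<omega>] s by (simp add: a_def)
  have "a \<le> b" using Sn_mono[OF \<omega>, of m "Suc m"] by (auto simp: a_def b_def)
  have "(LINT t:{a<..b}|lborel. c (Xt \<omega> t)) = sojourn_cost s \<omega> m"
  proof cases
    assume "a = b" then show ?thesis by (simp add: sojourn_cost_def a_def b_def set_lebesgue_integral_def)
  next
    assume "a \<noteq> b"
    then have "a = Sn \<omega> m" and "b \<le> Sn \<omega> (Suc m)" using \<open>a \<le> b\<close>
      by (auto simp: a_def b_def min_def split: if_splits)
    then have "AE t\<in>{a<..b} in lborel. c (Xt \<omega> t) = c (Xn \<omega> m)"
      using AE_lborel_singleton[of b] by (auto elim!: eventually_mono intro!: arg_cong[where f=c] Xt_eq_Xn[OF \<omega>])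
    then have "(LINT t:{a<..b}|lborel. c (Xt \<omega> t)) = (LINT t:{a<..b}|lborel. c (Xn \<omega> m))"
      using \<omega> by (intro set_lebesgue_integral_cong_AE) (auto simp: measurable_cong_sets[OF sets_lborel refl])
    also have "\<dots> = c (Xn \<omega> m) * (b - a)" using \<open>a \<le> b\<close> by (simp add: set_integral_const)
    finally show ?thesis by (simp add: sojourn_cost_def a_def b_def)
  qed
  then show ?case using Suc run_cost_split[OF \<omega> \<open>0 \<le> a\<close> \<open>a \<le> b\<close>] by (simp add: a_def b_def)
qed

lemma sojourn_cost_bounds: "\<omega> \<in> space Omega \<Longrightarrow> 0 \<le> sojourn_cost T \<omega> j \<and> sojourn_cost T \<omega> j \<le> cmax * T"
proof -
  assume \<omega>: "\<omega> \<in> space Omega"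
  define d where "d = min (Sn \<omega> (Suc j)) T - min (Sn \<omega> j) T"
  have "0 \<le> d" "d \<le> T" using Sn_mono[OF \<omega>, of j "Suc j"] Sn_nonneg[OF \<omega>, of j] T_nonneg
    by (auto simp: d_def min_def)
  then show ?thesis
    using c_nonneg c_le cmax_nonneg unfolding sojourn_cost_def d_def[symmetric] by (auto intro: mult_mono)
qed

lemma measurable_sojourn_cost[measurable]: "(\<lambda>\<omega>. sojourn_cost T \<omega> j) \<in> borel_measurable Omega"
  unfolding sojourn_cost_def by measurable

lemma measurable_Rcost:
  assumes \<sigma>: "is_stopping_time \<sigma>"
  shows "Rcost c g s \<sigma> \<in> borel_measurable Omega"
proof -
  note measurable_Stau[OF \<sigma>, measurable]
  have [measurable]: "(\<lambda>\<omega>. real_of_ereal (Stau \<sigma> \<omega>)) \<in> borel_measurable Omega" by measurable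
  have "(\<lambda>\<omega>. (\<omega>, real_of_ereal (Stau \<sigma> \<omega>))) \<in> Omega \<rightarrow>\<^sub>M Omega \<Otimes>\<^sub>M borel" by measurable
  from measurable_compose[OF measurable_compose[OF this measurable_Xt] g_measurable]
  have [measurable]: "(\<lambda>\<omega>. g (Xt \<omega> (real_of_ereal (Stau \<sigma> \<omega>)))) \<in> borel_measurable Omega" by simp
  have [measurable]: "(\<lambda>\<omega>. LINT t:{0..a \<omega>}|lborel. c (Xt \<omega> t)) \<in> borel_measurable Omega"
    if [measurable]: "a \<in> borel_measurable Omega" for a
    by (rule measurable_set_integral_Icc) measurable
  show ?thesis unfolding Rcost_def[abs_def] by measurable
qed

lemma Rcost_bounds:
  assumes \<omega>: "\<omega> \<in> space Omega" and s: "0 \<le> s"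
  shows "0 \<le> Rcost c g s \<sigma> \<omega>" "Rcost c g s \<sigma> \<omega> \<le> cmax * s + gmax"
proof -
  show "0 \<le> Rcost c g s \<sigma> \<omega>"
    using run_cost_nonneg g_nonneg by (simp add: Rcost_eq_run_cost)
  show "Rcost c g s \<sigma> \<omega> \<le> cmax * s + gmax"
  proof (cases "Stau \<sigma> \<omega> < ereal s")
    case True
    define a where "a = real_of_ereal (Stau \<sigma> \<omega>)"
    have "Stau \<sigma> \<omega> = ereal a"
      using True Stau_nonneg[OF \<omega>, of \<sigma>] unfolding a_def by (cases "Stau \<sigma> \<omega>") auto
    then have "0 \<le> a" "a < s" using Stau_nonneg[OF \<omega>, of \<sigma>] True by auto
    then have "run_cost \<omega> a \<le> cmax * s"
      using run_cost_le[OF \<omega>] cmax_nonneg by (meson less_eq_real_def mult_left_mono order_trans)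
    then show ?thesis using True g_le by (simp add: Rcost_eq_run_cost a_def[symmetric] add_mono)
  next
    case False
    then show ?thesis using run_cost_le[OF \<omega> s] gmax_nonneg by (simp add: Rcost_eq_run_cost)
  qed
qed

end

section \<open>The value process of a stopping time\<close>

context stopping_problem
begin

definition cost_before :: "('e omega \<Rightarrow> enat) \<Rightarrow> nat \<Rightarrow> 'e omega \<Rightarrow> real" where
  "cost_before \<sigma> m \<omega> = (\<Sum>j<m. if enat j < \<sigma> \<omega> then sojourn_cost T \<omega> j else 0)"

definition reward_before :: "('e omega \<Rightarrow> enat) \<Rightarrow> nat \<Rightarrow> 'e omega \<Rightarrow> real" where
  "reward_before \<sigma> m \<omega> = (\<Sum>j<m. if \<sigma> \<omega> = enat j \<and> Sn \<omega> j < T then g (Xn \<omega> j) else 0)"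

definition value_at :: "(real \<Rightarrow> 'e \<Rightarrow> real) \<Rightarrow> ('e omega \<Rightarrow> enat) \<Rightarrow> nat \<Rightarrow> 'e omega \<Rightarrow> real" where
  "value_at U \<sigma> m \<omega> = (if enat m \<le> \<sigma> \<omega> \<and> Sn \<omega> m < T then U (T - Sn \<omega> m) (Xn \<omega> m) else 0)"

definition value_process :: "(real \<Rightarrow> 'e \<Rightarrow> real) \<Rightarrow> ('e omega \<Rightarrow> enat) \<Rightarrow> nat \<Rightarrow> 'e omega \<Rightarrow> real" where
  "value_process U \<sigma> m \<omega> = cost_before \<sigma> m \<omega> + reward_before \<sigma> m \<omega> + value_at U \<sigma> m \<omega>"

text \<open>The cost of the next sojourn plus \<open>U\<close> after the next jump, as a function of the history
  \<open>Y\<^sub>m\<close> and of the next step \<open>(T\<^sub>m\<^sub>+\<^sub>1, X\<^sub>m\<^sub>+\<^sub>1)\<close>.\<close>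

definition step_integrand :: "(real \<Rightarrow> 'e \<Rightarrow> real) \<Rightarrow> nat \<Rightarrow> ('e \<times> (nat \<Rightarrow> real \<times> 'e)) \<times> (real \<times> 'e) \<Rightarrow> real" where
  "step_integrand U m z =
     c (hist_X m (fst z)) * (min (hist_S m (fst z) + fst (snd z)) T - min (hist_S m (fst z)) T)
     + (if hist_S m (fst z) + fst (snd z) < T then U (T - hist_S m (fst z) - fst (snd z)) (snd (snd z)) else 0)"

definition step_value :: "(real \<Rightarrow> 'e \<Rightarrow> real) \<Rightarrow> nat \<Rightarrow> 'e omega \<Rightarrow> real" where
  "step_value U m \<omega> = (\<integral>p. step_integrand U m (Yn m \<omega>, p) \<partial>K (Xn \<omega> m))"

text \<open>The conditional expectation of \<open>value_process U \<sigma> (Suc m)\<close> given \<open>F\<^sub>m\<close>.\<close>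

definition cond_value_process :: "(real \<Rightarrow> 'e \<Rightarrow> real) \<Rightarrow> ('e omega \<Rightarrow> enat) \<Rightarrow> nat \<Rightarrow> 'e omega \<Rightarrow> real" where
  "cond_value_process U \<sigma> m \<omega> =
     cost_before \<sigma> m \<omega> + reward_before \<sigma> (Suc m) \<omega> + (if enat m < \<sigma> \<omega> then step_value U m \<omega> else 0)"

lemma cost_before_bounds:
  assumes "\<omega> \<in> space Omega"
  shows "0 \<le> cost_before \<sigma> m \<omega> \<and> cost_before \<sigma> m \<omega> \<le> real m * (cmax * T)"
proof -
  have "0 \<le> cost_before \<sigma> m \<omega>"
    unfolding cost_before_def using sojourn_cost_bounds[OF assms] by (intro sum_nonneg) auto
  moreover have "cost_before \<sigma> m \<omega> \<le> (\<Sum>j<m. cmax * T)" unfolding cost_before_def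
    using sojourn_cost_bounds[OF assms] cmax_nonneg T_nonneg by (intro sum_mono) auto
  ultimately show ?thesis by simp
qed

lemma reward_before_bounds: "0 \<le> reward_before \<sigma> m \<omega> \<and> reward_before \<sigma> m \<omega> \<le> real m * gmax"
proof -
  have "0 \<le> reward_before \<sigma> m \<omega>" unfolding reward_before_def using g_nonneg by (intro sum_nonneg) auto
  moreover have "reward_before \<sigma> m \<omega> \<le> (\<Sum>j<m. gmax)" unfolding reward_before_def
    using g_le gmax_nonneg by (intro sum_mono) auto
  ultimately show ?thesis by simp
qed

lemma reward_before_Suc:
  "reward_before \<sigma> (Suc m) \<omega> = reward_before \<sigma> m \<omega> + (if \<sigma> \<omega> = enat m \<and> Sn \<omega> m < T then g (Xn \<omega> m) else 0)"
  by (simp add: reward_before_def)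

lemma cost_before_eq_run_cost:
  assumes "\<omega> \<in> space Omega"
  shows "cost_before \<sigma> n \<omega> = run_cost \<omega> (min (Sn \<omega> (case \<sigma> \<omega> of enat i \<Rightarrow> min i n | \<infinity> \<Rightarrow> n)) T)"
proof -
  let ?q = "case \<sigma> \<omega> of enat i \<Rightarrow> min i n | \<infinity> \<Rightarrow> n"
  have "cost_before \<sigma> n \<omega> = (\<Sum>j\<in>{j\<in>{..<n}. enat j < \<sigma> \<omega>}. sojourn_cost T \<omega> j)"
    unfolding cost_before_def by (rule sum.inter_filter[symmetric]) simp
  also have "{j\<in>{..<n}. enat j < \<sigma> \<omega>} = {..<?q}"
    by (cases "\<sigma> \<omega>") auto
  finally show ?thesis using run_cost_eq_sum_sojourn_cost[OF assms T_nonneg] by simp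
qed

lemma reward_before_eq:
  "reward_before \<sigma> n \<omega>
    = (case \<sigma> \<omega> of enat i \<Rightarrow> (if i < n \<and> Sn \<omega> i < T then g (Xn \<omega> i) else 0) | \<infinity> \<Rightarrow> 0)"
proof (cases "\<sigma> \<omega>")
  case (enat i)
  have "reward_before \<sigma> n \<omega> = (\<Sum>j<n. if j = i then (if Sn \<omega> i < T then g (Xn \<omega> i) else 0) else 0)"
    unfolding reward_before_def enat by (intro sum.cong) auto
  then show ?thesis using enat by (simp add: sum.delta')
qed (simp add: reward_before_def)

lemma Rcost_bounds_after:
  assumes \<omega>: "\<omega> \<in> space Omega" and n: "ereal (Sn \<omega> n) \<le> Stau \<sigma> \<omega>"
  shows "run_cost \<omega> (min (Sn \<omega> n) T) \<le> Rcost c g T \<sigma> \<omega>"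
    and "Rcost c g T \<sigma> \<omega> \<le> run_cost \<omega> (min (Sn \<omega> n) T) + (if Sn \<omega> n < T then cmax * T + gmax else 0)"
proof -
  have S_n: "0 \<le> Sn \<omega> n" by (rule Sn_nonneg[OF \<omega>])
  have "run_cost \<omega> (min (Sn \<omega> n) T) \<le> Rcost c g T \<sigma> \<omega> \<and>
    Rcost c g T \<sigma> \<omega> \<le> run_cost \<omega> (min (Sn \<omega> n) T) + (if Sn \<omega> n < T then cmax * T + gmax else 0)"
  proof (cases "Stau \<sigma> \<omega> < ereal T")
    case True
    define a where "a = real_of_ereal (Stau \<sigma> \<omega>)"
    have "Stau \<sigma> \<omega> = ereal a"
      using True n unfolding a_def by (cases "Stau \<sigma> \<omega>") auto
    then have "Sn \<omega> n \<le> a" "a < T" using n True by auto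
    then show ?thesis
      using run_cost_within_T[OF \<omega> S_n, of a] g_nonneg[of "Xt \<omega> a"] g_le[of "Xt \<omega> a"]
      by (auto simp: Rcost_eq_run_cost a_def[symmetric] True)
  next
    case False
    then show ?thesis
      using run_cost_within_T[OF \<omega> S_n, of T] gmax_nonneg
      by (auto simp: Rcost_eq_run_cost min_def)
  qed
  then show "run_cost \<omega> (min (Sn \<omega> n) T) \<le> Rcost c g T \<sigma> \<omega>"
    and "Rcost c g T \<sigma> \<omega> \<le> run_cost \<omega> (min (Sn \<omega> n) T) + (if Sn \<omega> n < T then cmax * T + gmax else 0)"
    by auto
qed

lemma Rcost_bounds_value_process:
  assumes \<omega>: "\<omega> \<in> space Omega" and sojourn_pos: "\<forall>j. 0 < Tn \<omega> (Suc j)"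
  shows "cost_before \<sigma> n \<omega> + reward_before \<sigma> n \<omega> \<le> Rcost c g T \<sigma> \<omega>"
    and "Rcost c g T \<sigma> \<omega>
      \<le> cost_before \<sigma> n \<omega> + reward_before \<sigma> n \<omega> + (if Sn \<omega> n < T then cmax * T + gmax else 0)"
proof -
  have M: "0 \<le> cmax * T + gmax" using cmax_nonneg gmax_nonneg T_nonneg by simp
  have "cost_before \<sigma> n \<omega> + reward_before \<sigma> n \<omega> \<le> Rcost c g T \<sigma> \<omega> \<and> Rcost c g T \<sigma> \<omega>
      \<le> cost_before \<sigma> n \<omega> + reward_before \<sigma> n \<omega> + (if Sn \<omega> n < T then cmax * T + gmax else 0)"
  proof (cases "\<exists>i<n. \<sigma> \<omega> = enat i")
    case True
    then obtain i where i: "i < n" "\<sigma> \<omega> = enat i" by blast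
    have "Xt \<omega> (Sn \<omega> i) = Xn \<omega> i"
      using sojourn_pos by (intro Xt_eq_Xn[OF \<omega>]) (auto simp: Sn_Suc Tn_Suc)
    then have "Rcost c g T \<sigma> \<omega> = cost_before \<sigma> n \<omega> + reward_before \<sigma> n \<omega>"
      using i by (auto simp: Rcost_eq_run_cost Stau_def cost_before_eq_run_cost[OF \<omega>] reward_before_eq min_def)
    then show ?thesis using M by simp
  next
    case False
    then have "ereal (Sn \<omega> n) \<le> Stau \<sigma> \<omega>"
      using Sinf_ge[of \<omega> n] Sn_mono[OF \<omega>] by (cases "\<sigma> \<omega>") (auto simp: Stau_def not_less)
    moreover have "cost_before \<sigma> n \<omega> = run_cost \<omega> (min (Sn \<omega> n) T)" "reward_before \<sigma> n \<omega> = 0"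
      using False by (cases "\<sigma> \<omega>"; force simp: cost_before_eq_run_cost[OF \<omega>] reward_before_eq min_absorb2)+
    ultimately show ?thesis using Rcost_bounds_after[OF \<omega>] by simp
  qed
  then show "cost_before \<sigma> n \<omega> + reward_before \<sigma> n \<omega> \<le> Rcost c g T \<sigma> \<omega>"
    and "Rcost c g T \<sigma> \<omega>
      \<le> cost_before \<sigma> n \<omega> + reward_before \<sigma> n \<omega> + (if Sn \<omega> n < T then cmax * T + gmax else 0)"
    by auto
qed

lemma step_integrand_bounds:
  assumes z: "z \<in> space (history_space m \<Otimes>\<^sub>M Mstep)" and U: "\<And>s x. 0 \<le> U s x \<and> U s x \<le> BU"
  shows "0 \<le> step_integrand U m z \<and> step_integrand U m z \<le> cmax * T + BU"
proof -
  have "0 \<le> hist_S m (fst z)" using z by (intro hist_S_nonneg) (auto simp: space_pair_measure)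
  moreover have "0 \<le> fst (snd z)" using z by (auto simp: space_pair_measure space_Mstep mem_Times_iff)
  moreover define d where "d = min (hist_S m (fst z) + fst (snd z)) T - min (hist_S m (fst z)) T"
  ultimately have "0 \<le> d" "d \<le> T" using T_nonneg by (auto simp: min_def)
  then have "0 \<le> c (hist_X m (fst z)) * d" "c (hist_X m (fst z)) * d \<le> cmax * T"
    using c_nonneg c_le cmax_nonneg by (auto intro: mult_mono)
  moreover have "0 \<le> BU" using U by (meson order_trans)
  ultimately show ?thesis
    using U unfolding step_integrand_def d_def[symmetric] by (auto intro: add_mono add_nonneg_nonneg)
qed

lemma step_integrand_eq:
  assumes "\<omega> \<in> space Omega" and "Sn \<omega> m < T" and "0 \<le> fst p"
  shows "step_integrand U m (Yn m \<omega>, p) = c (Xn \<omega> m) * max 0 (min (fst p) (T - Sn \<omega> m))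
           + (if fst p < T - Sn \<omega> m then U (T - Sn \<omega> m - fst p) (snd p) else 0)"
proof -
  have "min (Sn \<omega> m + fst p) T - min (Sn \<omega> m) T = max 0 (min (fst p) (T - Sn \<omega> m))"
    using assms by (auto simp: min_def max_def)
  then show ?thesis
    by (simp add: step_integrand_def Xn_eq_hist_X[of m m, symmetric] Sn_eq_hist_S[of m m, symmetric]
        diff_diff_eq add.commute)
qed

lemma step_integrand_next:
  "step_integrand U m (Yn m \<omega>, snd \<omega> m) = sojourn_cost T \<omega> m +
     (if Sn \<omega> (Suc m) < T then U (T - Sn \<omega> (Suc m)) (Xn \<omega> (Suc m)) else 0)"
  by (simp add: step_integrand_def sojourn_cost_def Xn_eq_hist_X[of m m] Sn_eq_hist_S[of m m]
      Sn_Suc Xn_Suc diff_diff_eq)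

lemma measurable_cost_before: "is_stopping_time \<sigma> \<Longrightarrow> cost_before \<sigma> m \<in> borel_measurable Omega"
  unfolding cost_before_def[abs_def]
  using measurable_stopping_time_pred[of \<sigma> "\<lambda>e. enat _ < e"] by measurable

lemma measurable_reward_before: "is_stopping_time \<sigma> \<Longrightarrow> reward_before \<sigma> m \<in> borel_measurable Omega"
  unfolding reward_before_def[abs_def]
  using measurable_stopping_time_pred[of \<sigma> "\<lambda>e. e = enat _"] by measurable

lemma measurable_value_process:
  assumes \<sigma>: "is_stopping_time \<sigma>" and U: "bdd_measurable U"
  shows "value_process U \<sigma> m \<in> borel_measurable Omega"
proof -
  have [measurable]: "(\<lambda>\<omega>. U (T - Sn \<omega> m) (Xn \<omega> m)) \<in> borel_measurable Omega"
    by (rule measurable_bdd_measurable_comp[OF U]) measurable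
  note [measurable] = measurable_cost_before[OF \<sigma>] measurable_reward_before[OF \<sigma>]
  show ?thesis unfolding value_process_def[abs_def] value_at_def
    using measurable_stopping_time_pred[OF \<sigma>, of "\<lambda>e. enat m \<le> e"] by measurable
qed

lemma measurable_step_integrand:
  assumes "bdd_measurable U"
  shows "step_integrand U m \<in> borel_measurable (history_space m \<Otimes>\<^sub>M Mstep)"
proof -
  have [measurable]: "(\<lambda>z. hist_X m (fst z)) \<in> borel_measurable (history_space m \<Otimes>\<^sub>M Mstep)"
    "(\<lambda>z. hist_S m (fst z)) \<in> borel_measurable (history_space m \<Otimes>\<^sub>M Mstep)"
    "(\<lambda>z. fst (snd z)) \<in> borel_measurable (history_space m \<Otimes>\<^sub>M Mstep)"
    "(\<lambda>z. snd (snd z)) \<in> borel_measurable (history_space m \<Otimes>\<^sub>M Mstep)"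
    by (auto intro: measurable_compose[OF measurable_fst] measurable_compose[OF measurable_snd])
  have [measurable]: "(\<lambda>z. U (T - hist_S m (fst z) - fst (snd z)) (snd (snd z)))
      \<in> borel_measurable (history_space m \<Otimes>\<^sub>M Mstep)"
    by (rule measurable_bdd_measurable_comp[OF assms]) measurable
  show ?thesis unfolding step_integrand_def[abs_def] by measurable
qed

lemma measurable_step_value:
  assumes "bdd_measurable U"
  shows "step_value U m \<in> borel_measurable Omega"
proof -
  note measurable_step_integrand[OF assms, of m, measurable]
  show ?thesis unfolding step_value_def[abs_def]
    by (rule integral_measurable_subprob_algebra2[where N=Mstep]) measurable
qed

lemma measurable_cond_value_process:
  assumes \<sigma>: "is_stopping_time \<sigma>" and U: "bdd_measurable U"
  shows "cond_value_process U \<sigma> m \<in> borel_measurable Omega"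
proof -
  note [measurable] = measurable_cost_before[OF \<sigma>] measurable_reward_before[OF \<sigma>] measurable_step_value[OF U]
  show ?thesis unfolding cond_value_process_def[abs_def]
    using measurable_stopping_time_pred[OF \<sigma>, of "\<lambda>e. enat m < e"] by measurable
qed

lemma step_value_bounds_integrable:
  assumes \<omega>: "\<omega> \<in> space Omega" and U: "bdd_measurable U" "\<And>s x. 0 \<le> U s x \<and> U s x \<le> BU"
  shows "integrable (K (Xn \<omega> m)) (\<lambda>p. step_integrand U m (Yn m \<omega>, p))"
    and "0 \<le> step_value U m \<omega> \<and> step_value U m \<omega> \<le> cmax * T + BU"
proof -
  interpret K: prob_space "K (Xn \<omega> m)" by (rule prob_space_K)
  have [measurable]: "(\<lambda>p. (Yn m \<omega>, p)) \<in> K (Xn \<omega> m) \<rightarrow>\<^sub>M history_space m \<Otimes>\<^sub>M Mstep"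
    using measurable_space[OF measurable_Yn \<omega>] by (simp add: measurable_cong_sets[OF sets_K refl])
  have bounds: "0 \<le> step_integrand U m (Yn m \<omega>, p) \<and> step_integrand U m (Yn m \<omega>, p) \<le> cmax * T + BU"
    if "p \<in> space (K (Xn \<omega> m))" for p
    using that measurable_space[OF measurable_Yn \<omega>]
    by (intro step_integrand_bounds[OF _ U(2)]) (auto simp: space_pair_measure space_K space_Mstep)
  show int: "integrable (K (Xn \<omega> m)) (\<lambda>p. step_integrand U m (Yn m \<omega>, p))"
    using bounds measurable_step_integrand[OF U(1)]
    by (intro K.integrable_const_bound[where B="cmax * T + BU"] AE_I2) auto
  have "step_value U m \<omega> \<le> (\<integral>p. cmax * T + BU \<partial>K (Xn \<omega> m))"
    unfolding step_value_def using bounds by (intro integral_mono int) auto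
  then show "0 \<le> step_value U m \<omega> \<and> step_value U m \<omega> \<le> cmax * T + BU"
    using bounds unfolding step_value_def by (auto intro!: integral_nonneg_AE AE_I2 simp: K.prob_space)
qed

lemma step_value_le_cont_cost:
  assumes \<omega>: "\<omega> \<in> space Omega" and S: "Sn \<omega> m < T"
    and U: "bdd_measurable U" "\<And>s x. 0 \<le> U s x \<and> U s x \<le> BU"
  shows "step_value U m \<omega> \<le> cont_cost U (T - Sn \<omega> m) (Xn \<omega> m)"
  unfolding step_value_def cont_cost_eq_integral(1)[OF U(1)]
proof (rule integral_mono[OF step_value_bounds_integrable(1)[OF \<omega> U] cont_cost_eq_integral(2)[OF U(1)]])
  fix p assume "p \<in> space (K (Xn \<omega> m))"
  then have p: "0 \<le> fst p" by (auto simp: space_K mem_Times_iff)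
  show "step_integrand U m (Yn m \<omega>, p) \<le> c (Xn \<omega> m) * max 0 (min (fst p) (T - Sn \<omega> m)) +
      indicator ({0..T - Sn \<omega> m} \<times> UNIV) p * U (T - Sn \<omega> m - fst p) (snd p)"
    unfolding step_integrand_eq[OF \<omega> S p] using p U(2) by (auto simp: indicator_def mem_Times_iff)
qed

lemma step_value_eq_cont_cost:
  assumes \<omega>: "\<omega> \<in> space Omega" and S: "Sn \<omega> m < T"
    and U: "bdd_measurable U" and U_time_zero: "\<And>y. U 0 y = 0"
  shows "step_value U m \<omega> = cont_cost U (T - Sn \<omega> m) (Xn \<omega> m)"
  unfolding step_value_def cont_cost_eq_integral(1)[OF U]
proof (rule Bochner_Integration.integral_cong[OF refl])
  fix p assume "p \<in> space (K (Xn \<omega> m))"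
  then have p: "0 \<le> fst p" by (auto simp: space_K mem_Times_iff)
  show "step_integrand U m (Yn m \<omega>, p) = c (Xn \<omega> m) * max 0 (min (fst p) (T - Sn \<omega> m)) +
      indicator ({0..T - Sn \<omega> m} \<times> UNIV) p * U (T - Sn \<omega> m - fst p) (snd p)"
    unfolding step_integrand_eq[OF \<omega> S p] using p U_time_zero by (auto simp: indicator_def mem_Times_iff)
qed

end

section \<open>The stopping time \<open>\<tau>\<^sup>\<epsilon>\<close>\<close>

lemma Inf_enat_image_mem: "Inf (enat ` B) = enat k \<Longrightarrow> k \<in> B"
proof -
  assume k: "Inf (enat ` B) = enat k"
  then have "B \<noteq> {}" by (auto simp: Inf_enat_def)
  then have "(LEAST x. x \<in> enat ` B) \<in> enat ` B" by (auto intro: LeastI)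
  then show ?thesis using k \<open>B \<noteq> {}\<close> by (auto simp: Inf_enat_def)
qed

context stopping_problem
begin

lemma tau_eps_eq_enat_iff:
  "tau_eps K c g T \<epsilon> \<omega> = enat n \<longleftrightarrow>
     (\<forall>j<n. (T - Sn \<omega> j, Xn \<omega> j) \<notin> Deps K c g T \<epsilon> \<and> Sn \<omega> j < T) \<and>
     ((T - Sn \<omega> n, Xn \<omega> n) \<in> Deps K c g T \<epsilon> \<or> T \<le> Sn \<omega> n)"
proof -
  define B where "B = {n. (T - Sn \<omega> n, Xn \<omega> n) \<in> Deps K c g T \<epsilon>} \<union> {n. T \<le> Sn \<omega> n}"
  have "tau_eps K c g T \<epsilon> \<omega> = Inf (enat ` B)"
    by (simp add: tau_eps_def B_def image_Un Inf_union_distrib inf_min)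
  moreover have "Inf (enat ` B) = enat n \<longleftrightarrow> (\<forall>j<n. j \<notin> B) \<and> n \<in> B"
  proof
    assume "Inf (enat ` B) = enat n"
    then show "(\<forall>j<n. j \<notin> B) \<and> n \<in> B"
      using Inf_enat_image_mem[of B n] Inf_lower[of "enat _" "enat ` B"] by force
  next
    assume "(\<forall>j<n. j \<notin> B) \<and> n \<in> B"
    then show "Inf (enat ` B) = enat n"
      by (intro antisym Inf_lower Inf_greatest) (auto simp: not_less[symmetric])
  qed
  ultimately show ?thesis by (auto simp: B_def not_le)
qed

lemma tau_eps_stop:
  assumes "tau_eps K c g T \<epsilon> \<omega> = enat k" "Sn \<omega> k < T"
  shows "(T - Sn \<omega> k, Xn \<omega> k) \<in> Deps K c g T \<epsilon>"
  using assms by (auto simp: tau_eps_eq_enat_iff)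

lemma tau_eps_continue:
  assumes "enat k < tau_eps K c g T \<epsilon> \<omega>"
  shows "(T - Sn \<omega> k, Xn \<omega> k) \<notin> Deps K c g T \<epsilon> \<and> Sn \<omega> k < T"
proof -
  have "(T - Sn \<omega> k, Xn \<omega> k) \<notin> Deps K c g T \<epsilon>" "\<not> T \<le> Sn \<omega> k"
    using assms by (auto simp: tau_eps_def) (meson Inf_lower imageI mem_Collect_eq leD)+
  then show ?thesis by simp
qed

lemma Deps_eq: "Deps K c g T \<epsilon> = {p. 0 < fst p \<and> fst p \<le> T \<and> g (snd p) = V (Suc (Neps K c g T \<epsilon>)) (fst p) (snd p)}"
  by (auto simp: Deps_def Gop_V)

lemma Deps_sets: "Deps K c g T \<epsilon> \<in> sets ((borel :: real measure) \<Otimes>\<^sub>M (borel :: 'e measure))"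
proof -
  have [measurable]: "(\<lambda>p. V (Suc (Neps K c g T \<epsilon>)) (fst p) (snd p)) \<in> borel_measurable (borel \<Otimes>\<^sub>M borel)"
    using bdd_measurable_measurable[OF V_bdd_measurable] by (simp add: case_prod_beta')
  have "{p \<in> space (borel \<Otimes>\<^sub>M borel). 0 < fst p \<and> fst p \<le> T \<and> g (snd p) = V (Suc (Neps K c g T \<epsilon>)) (fst p) (snd p)}
      \<in> sets (borel \<Otimes>\<^sub>M borel)"
    by measurable
  then show ?thesis by (simp add: Deps_eq space_pair_measure)
qed

lemma stopping_time_tau_eps: "is_stopping_time (tau_eps K c g T \<epsilon>)"
  unfolding is_stopping_time_def
proof
  fix n
  let ?D = "Deps K c g T \<epsilon>"
  define A where "A = {y \<in> space (history_space n).
    (\<forall>j<n. (T - hist_S j y, hist_X j y) \<notin> ?D \<and> hist_S j y < T) \<and>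
    ((T - hist_S n y, hist_X n y) \<in> ?D \<or> T \<le> hist_S n y)}"
  have [measurable]: "Measurable.pred (history_space n) (\<lambda>y. (T - hist_S j y, hist_X j y) \<in> ?D)"
    if "j \<le> n" for j
    by (rule pred_sets2[OF Deps_sets]) (use that in measurable)
  have "A \<in> sets (history_space n)"
    unfolding A_def by measurable
  moreover have "{\<omega> \<in> space Omega. tau_eps K c g T \<epsilon> \<omega> = enat n} = Yn n -` A \<inter> space Omega"
    using measurable_space[OF measurable_Yn]
    by (auto simp: tau_eps_eq_enat_iff A_def Sn_eq_hist_S[of _ n] Xn_eq_hist_X[of _ n])
  ultimately show "{\<omega> \<in> space Omega. tau_eps K c g T \<epsilon> \<omega> = enat n} \<in> sets (Fn n)"
    unfolding sets_Fn by blast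
qed

end

section \<open>Bounds on the expected cost of a stopping time\<close>

lemma le_of_le_add_geometric:
  fixes a b C q :: real
  assumes le: "\<And>k. a \<le> b + C * q ^ k" and "0 \<le> C" "0 \<le> q" "q < 1"
  shows "a \<le> b"
proof -
  have "(\<lambda>k. b + C * q ^ k) \<longlonglongrightarrow> b + C * 0"
    using assms by (intro tendsto_intros LIMSEQ_power_zero) auto
  then show ?thesis using le by (intro LIMSEQ_le_const) auto
qed

context stopping_problem
begin

text \<open>\<open>U\<close> dominates the cost of following \<open>\<tau>\<^sup>\<epsilon>\<close> for one step and then paying \<open>U\<close>.\<close>

definition policy_supersolution :: "real \<Rightarrow> (real \<Rightarrow> 'e \<Rightarrow> real) \<Rightarrow> bool" where
  "policy_supersolution \<epsilon> U \<longleftrightarrow> bdd_measurable U \<and> (\<forall>s x. 0 \<le> U s x) \<and>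
     (\<forall>s x. (s, x) \<in> Deps K c g T \<epsilon> \<longrightarrow> g x \<le> U s x) \<and>
     (\<forall>s x. 0 < s \<longrightarrow> s \<le> T \<longrightarrow> (s, x) \<notin> Deps K c g T \<epsilon> \<longrightarrow> cont_cost U s x \<le> U s x)"

lemma value_process_V_Suc_le_cond:
  assumes \<omega>: "\<omega> \<in> space Omega"
  shows "value_process (V (Suc j)) \<sigma> k \<omega> \<le> cond_value_process (V j) \<sigma> k \<omega>"
proof -
  have V: "\<And>s x. 0 \<le> V j s x \<and> V j s x \<le> gmax" using V_nonneg V_le_gmax by blast
  have "value_at (V (Suc j)) \<sigma> k \<omega> \<le> (if \<sigma> \<omega> = enat k \<and> Sn \<omega> k < T then g (Xn \<omega> k) else 0)
      + (if enat k < \<sigma> \<omega> then step_value (V j) k \<omega> else 0)"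
  proof (cases "enat k \<le> \<sigma> \<omega> \<and> Sn \<omega> k < T")
    case True
    show ?thesis
    proof (cases "\<sigma> \<omega> = enat k")
      case True
      then show ?thesis using \<open>enat k \<le> \<sigma> \<omega> \<and> Sn \<omega> k < T\<close> V_le_g by (simp add: value_at_def)
    next
      case False
      with True have "enat k < \<sigma> \<omega>" by auto
      have "V (Suc j) (T - Sn \<omega> k) (Xn \<omega> k) \<le> cont_cost (V j) (T - Sn \<omega> k) (Xn \<omega> k)"
        by (simp add: V_Suc)
      also have "\<dots> = step_value (V j) k \<omega>"
        using True by (intro step_value_eq_cont_cost[OF \<omega> _ V_bdd_measurable V_time_zero, symmetric]) simp
      finally show ?thesis using True False \<open>enat k < \<sigma> \<omega>\<close> by (simp add: value_at_def)
    qed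
  next
    case False
    then show ?thesis
      using step_value_bounds_integrable(2)[OF \<omega> V_bdd_measurable V] g_nonneg by (auto simp: value_at_def)
  qed
  then show ?thesis by (simp add: value_process_def cond_value_process_def reward_before_Suc)
qed

lemma value_process_tau_eps_le_cond:
  assumes \<omega>: "\<omega> \<in> space Omega" and U: "policy_supersolution \<epsilon> U" and UB: "\<And>s x. U s x \<le> BU"
  shows "cond_value_process U (tau_eps K c g T \<epsilon>) k \<omega> \<le> value_process U (tau_eps K c g T \<epsilon>) k \<omega>"
proof -
  let ?\<tau> = "tau_eps K c g T \<epsilon>"
  have U': "bdd_measurable U" "\<And>s x. 0 \<le> U s x \<and> U s x \<le> BU"
    using U UB by (auto simp: policy_supersolution_def)
  have S: "0 \<le> Sn \<omega> k" by (rule Sn_nonneg[OF \<omega>])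
  have "(if ?\<tau> \<omega> = enat k \<and> Sn \<omega> k < T then g (Xn \<omega> k) else 0)
      + (if enat k < ?\<tau> \<omega> then step_value U k \<omega> else 0) \<le> value_at U ?\<tau> k \<omega>"
  proof (cases "?\<tau> \<omega> = enat k")
    case True
    then show ?thesis
      using U tau_eps_stop[OF True] by (auto simp: value_at_def policy_supersolution_def)
  next
    case False
    show ?thesis
    proof (cases "enat k < ?\<tau> \<omega>")
      case True
      from tau_eps_continue[OF True]
      have "(T - Sn \<omega> k, Xn \<omega> k) \<notin> Deps K c g T \<epsilon>" and S_T: "Sn \<omega> k < T" by auto
      then have "cont_cost U (T - Sn \<omega> k) (Xn \<omega> k) \<le> U (T - Sn \<omega> k) (Xn \<omega> k)"
        using U S by (auto simp: policy_supersolution_def)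
      with step_value_le_cont_cost[OF \<omega> S_T U'] show ?thesis
        using True False S_T by (simp add: value_at_def less_imp_le)
    next
      case False
      with \<open>?\<tau> \<omega> \<noteq> enat k\<close> show ?thesis by (auto simp: value_at_def)
    qed
  qed
  then show ?thesis by (simp add: value_process_def cond_value_process_def reward_before_Suc)
qed

end

locale stopping_problem_path = stopping_problem K c g T + markov_renewal K x0 P
  for K :: "'e::polish_space \<Rightarrow> (real \<times> 'e) measure" and c g T x0 P
begin

lemma integrable_value_process:
  assumes \<sigma>: "is_stopping_time \<sigma>" and U: "bdd_measurable U" "\<And>s x. 0 \<le> U s x \<and> U s x \<le> BU"
  shows "integrable P (value_process U \<sigma> m)"
proof (rule integrable_bounded[OF measurable_value_process[OF \<sigma> U(1)]])
  fix \<omega> :: "'e omega" assume \<omega>: "\<omega> \<in> space Omega"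
  have "0 \<le> value_at U \<sigma> m \<omega> \<and> value_at U \<sigma> m \<omega> \<le> BU"
    using U(2) by (auto simp: value_at_def intro: order_trans)
  then show "\<bar>value_process U \<sigma> m \<omega>\<bar> \<le> real m * (cmax * T) + real m * gmax + BU"
    using cost_before_bounds[OF \<omega>, of \<sigma> m] reward_before_bounds[of \<sigma> m \<omega>] by (auto simp: value_process_def)
qed

lemma integrable_cond_value_process:
  assumes \<sigma>: "is_stopping_time \<sigma>" and U: "bdd_measurable U" "\<And>s x. 0 \<le> U s x \<and> U s x \<le> BU"
  shows "integrable P (cond_value_process U \<sigma> m)"
proof (rule integrable_bounded[OF measurable_cond_value_process[OF \<sigma> U(1)]])
  fix \<omega> :: "'e omega" assume \<omega>: "\<omega> \<in> space Omega"
  then show "\<bar>cond_value_process U \<sigma> m \<omega>\<bar> \<le> real m * (cmax * T) + real (Suc m) * gmax + (cmax * T + BU)"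
    using cost_before_bounds[OF \<omega>, of \<sigma> m] reward_before_bounds[of \<sigma> "Suc m" \<omega>]
      step_value_bounds_integrable(2)[OF \<omega> U, of m]
    by (auto simp: cond_value_process_def)
qed

lemma integrable_Rcost: "is_stopping_time \<sigma> \<Longrightarrow> integrable P (Rcost c g T \<sigma>)"
  by (rule integrable_bounded[OF measurable_Rcost]) (use Rcost_bounds[OF _ T_nonneg] in auto)

text \<open>One step of the Markov property, on the \<open>F\<^sub>m\<close>-event \<open>{m < \<sigma>}\<close>.\<close>

lemma integral_value_process_Suc:
  assumes \<sigma>: "is_stopping_time \<sigma>" and U: "bdd_measurable U" "\<And>s x. 0 \<le> U s x \<and> U s x \<le> BU"
  shows "(\<integral>\<omega>. value_process U \<sigma> (Suc m) \<omega> \<partial>P) = (\<integral>\<omega>. cond_value_process U \<sigma> m \<omega> \<partial>P)"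
proof -
  define A where "A = {\<omega> \<in> space Omega. enat m < \<sigma> \<omega>}"
  have A: "A \<in> sets (Fn m)" unfolding A_def by (rule stopping_time_gt_Fn[OF \<sigma>])
  then have [measurable]: "A \<in> sets Omega" using sets_Fn_subset by blast
  have M: "0 \<le> cmax * T + BU" using U(2)[of 0 undefined] cmax_nonneg T_nonneg by simp
  let ?past = "\<lambda>\<omega>. cost_before \<sigma> m \<omega> + reward_before \<sigma> (Suc m) \<omega>"
  have past_int: "integrable P ?past"
  proof (rule integrable_bounded)
    show "?past \<in> borel_measurable Omega"
      using measurable_cost_before[OF \<sigma>] measurable_reward_before[OF \<sigma>] by measurable
    show "\<bar>?past \<omega>\<bar> \<le> real m * (cmax * T) + real (Suc m) * gmax" if "\<omega> \<in> space Omega" for \<omega>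
      using cost_before_bounds[OF that, of \<sigma> m] reward_before_bounds[of \<sigma> "Suc m" \<omega>] by auto
  qed
  have [measurable]: "step_integrand U m \<in> borel_measurable (history_space m \<Otimes>\<^sub>M Mstep)"
    "step_value U m \<in> borel_measurable Omega"
    using measurable_step_integrand[OF U(1)] measurable_step_value[OF U(1)] by auto
  have next_int: "integrable P (\<lambda>\<omega>. indicator A \<omega> * step_integrand U m (Yn m \<omega>, snd \<omega> m))"
    using step_integrand_bounds[OF measurable_space[OF measurable_history_step] U(2)] M
    by (intro integrable_bounded[where B="cmax * T + BU"]) (auto simp: indicator_def)
  have cond_int: "integrable P (\<lambda>\<omega>. indicator A \<omega> * step_value U m \<omega>)"
    using step_value_bounds_integrable(2)[OF _ U] M
    by (intro integrable_bounded[where B="cmax * T + BU"]) (auto simp: indicator_def)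
  have "(\<integral>\<omega>. value_process U \<sigma> (Suc m) \<omega> \<partial>P)
      = (\<integral>\<omega>. ?past \<omega> + indicator A \<omega> * step_integrand U m (Yn m \<omega>, snd \<omega> m) \<partial>P)"
    by (intro Bochner_Integration.integral_cong refl)
       (auto simp: value_process_def value_at_def cost_before_def step_integrand_next A_def space_P Suc_ile_eq)
  also have "\<dots> = (\<integral>\<omega>. ?past \<omega> \<partial>P) + (\<integral>\<omega>. indicator A \<omega> * step_value U m \<omega> \<partial>P)"
    using integral_step_indicator[OF A measurable_step_integrand[OF U(1)] step_integrand_bounds[OF _ U(2)]]
      past_int next_int
    by (simp add: step_value_def)
  also have "\<dots> = (\<integral>\<omega>. ?past \<omega> + indicator A \<omega> * step_value U m \<omega> \<partial>P)"
    by (rule Bochner_Integration.integral_add[symmetric, OF past_int cond_int])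
  also have "\<dots> = (\<integral>\<omega>. cond_value_process U \<sigma> m \<omega> \<partial>P)"
    by (intro Bochner_Integration.integral_cong refl) (auto simp: cond_value_process_def A_def space_P)
  finally show ?thesis .
qed

lemma integral_value_process_0:
  assumes \<sigma>: "is_stopping_time \<sigma>" and U: "bdd_measurable U"
  shows "(\<integral>\<omega>. value_process U \<sigma> 0 \<omega> \<partial>P) = (if 0 < T then U T x0 else 0)"
proof -
  have "AE \<omega> in P. value_process U \<sigma> 0 \<omega> = (if 0 < T then U T x0 else 0)"
    using AE_start
    by eventually_elim (simp add: value_process_def cost_before_def reward_before_def value_at_def
        Sn_conv_sum zero_enat_def[symmetric])
  then have "(\<integral>\<omega>. value_process U \<sigma> 0 \<omega> \<partial>P) = (\<integral>\<omega>. (if 0 < T then U T x0 else 0) \<partial>P)"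
    using measurable_value_process[OF \<sigma> U] by (intro integral_cong_AE) (auto simp: measurable_P_iff)
  then show ?thesis by (simp add: prob_space)
qed

theorem V_le_integral_Rcost:
  assumes \<sigma>: "is_stopping_time \<sigma>"
  shows "V n T x0 \<le> (\<integral>\<omega>. Rcost c g T \<sigma> \<omega> \<partial>P)"
proof -
  have V: "\<And>s x. 0 \<le> V j s x \<and> V j s x \<le> gmax" for j using V_nonneg V_le_gmax by blast
  define F where "F k = (\<integral>\<omega>. value_process (V (n - k)) \<sigma> k \<omega> \<partial>P)" for k
  have "F k \<le> F (Suc k)" if "k < n" for k
  proof -
    obtain j where j: "n - k = Suc j" "n - Suc k = j" using \<open>k < n\<close> by (metis Suc_diff_Suc)
    have "F k \<le> (\<integral>\<omega>. cond_value_process (V j) \<sigma> k \<omega> \<partial>P)"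
      unfolding F_def j
      by (intro integral_mono integrable_value_process[OF \<sigma> V_bdd_measurable V]
          integrable_cond_value_process[OF \<sigma> V_bdd_measurable V])
         (simp add: value_process_V_Suc_le_cond space_P)
    also have "\<dots> = F (Suc k)"
      unfolding F_def j by (rule integral_value_process_Suc[OF \<sigma> V_bdd_measurable V, symmetric])
    finally show ?thesis .
  qed
  then have "F 0 \<le> F k" if "k \<le> n" for k
    using that by (induct k) (auto intro: order_trans)
  moreover have "F 0 = V n T x0"
    using integral_value_process_0[OF \<sigma> V_bdd_measurable, of n] T_nonneg V_time_zero[of n x0]
    by (auto simp: F_def)
  moreover have "F n \<le> (\<integral>\<omega>. Rcost c g T \<sigma> \<omega> \<partial>P)"
    unfolding F_def
  proof (rule integral_mono_AE[OF integrable_value_process[OF \<sigma> V_bdd_measurable V] integrable_Rcost[OF \<sigma>]])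
    show "AE \<omega> in P. value_process (V (n - n)) \<sigma> n \<omega> \<le> Rcost c g T \<sigma> \<omega>"
      using AE_sojourn_pos AE_space
      by eventually_elim
         (simp add: Rcost_bounds_value_process(1) space_P value_process_def value_at_def V_0)
  qed
  ultimately show ?thesis by (metis order.refl order_trans)
qed

lemma integral_step_Sn_le_T:
  assumes \<omega>: "\<omega> \<in> space Omega"
  shows "(\<integral>p. (if Sn \<omega> k + fst p \<le> T then 1 else 0 :: real) \<partial>K (Xn \<omega> k))
    \<le> \<beta> * (if Sn \<omega> k \<le> T then 1 else 0)"
proof -
  interpret K: prob_space "K (Xn \<omega> k)" by (rule prob_space_K)
  have "(\<integral>p. (if Sn \<omega> k + fst p \<le> T then 1 else 0 :: real) \<partial>K (Xn \<omega> k))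
      = (\<integral>p. indicator ({0..T - Sn \<omega> k} \<times> UNIV) p \<partial>K (Xn \<omega> k))"
    by (intro Bochner_Integration.integral_cong refl)
       (auto simp: space_K indicator_def mem_Times_iff)
  also have "\<dots> = Qk K (T - Sn \<omega> k) UNIV (Xn \<omega> k)"
    using integral_indicator_time_le[where D=1] by simp
  also have "\<dots> \<le> \<beta> * (if Sn \<omega> k \<le> T then 1 else 0)"
  proof (cases "Sn \<omega> k \<le> T")
    case True
    then show ?thesis using Qk_le_beta[of "T - Sn \<omega> k"] Sn_nonneg[OF \<omega>] by simp
  next
    case False
    then have "{0..T - Sn \<omega> k} \<times> UNIV = ({} :: (real \<times> 'e) set)" by auto
    then show ?thesis using False by (simp add: Qk_def)
  qed
  finally show ?thesis .
qed

lemma integral_Sn_le_T: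
  "(\<integral>\<omega>. (if Sn \<omega> k \<le> T then 1 else 0) \<partial>P) \<le> \<beta> ^ k"
proof (induct k)
  case 0
  show ?case using T_nonneg by (simp add: Sn_conv_sum prob_space)
next
  case (Suc k)
  define h where "h z = (if hist_S k (fst z) + fst (snd z) \<le> T then 1 else 0 :: real)"
    for z :: "('e \<times> (nat \<Rightarrow> real \<times> 'e)) \<times> (real \<times> 'e)"
  have [measurable]: "h \<in> borel_measurable (history_space k \<Otimes>\<^sub>M Mstep)"
  proof -
    have [measurable]: "(\<lambda>z. hist_S k (fst z)) \<in> borel_measurable (history_space k \<Otimes>\<^sub>M Mstep)"
      "(\<lambda>z. fst (snd z)) \<in> borel_measurable (history_space k \<Otimes>\<^sub>M Mstep)"
      by (auto intro: measurable_compose[OF measurable_fst] measurable_compose[OF measurable_snd])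
    show ?thesis unfolding h_def[abs_def] by measurable
  qed
  have inner_eq: "(\<integral>p. h (Yn k \<omega>, p) \<partial>K (Xn \<omega> k))
      = (\<integral>p. (if Sn \<omega> k + fst p \<le> T then 1 else 0) \<partial>K (Xn \<omega> k))" for \<omega>
    by (simp add: h_def Sn_eq_hist_S[of k k])
  have "(\<integral>\<omega>. (if Sn \<omega> (Suc k) \<le> T then 1 else 0) \<partial>P) = (\<integral>\<omega>. h (Yn k \<omega>, snd \<omega> k) \<partial>P)"
    by (simp add: h_def Sn_Suc Sn_eq_hist_S[of k k])
  also have "\<dots> = (\<integral>\<omega>. (\<integral>p. h (Yn k \<omega>, p) \<partial>K (Xn \<omega> k)) \<partial>P)"
    by (rule integral_step[where B=1]) (measurable, auto simp: h_def)
  also have "\<dots> \<le> (\<integral>\<omega>. \<beta> * (if Sn \<omega> k \<le> T then 1 else 0) \<partial>P)"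
  proof (rule integral_mono)
    show "integrable P (\<lambda>\<omega>. \<integral>p. h (Yn k \<omega>, p) \<partial>K (Xn \<omega> k))"
    proof (rule integrable_bounded[where B=1])
      show "(\<lambda>\<omega>. \<integral>p. h (Yn k \<omega>, p) \<partial>K (Xn \<omega> k)) \<in> borel_measurable Omega"
        by (rule integral_measurable_subprob_algebra2[where N=Mstep]) measurable
      fix \<omega> :: "'e omega"
      interpret K: prob_space "K (Xn \<omega> k)" by (rule prob_space_K)
      have "\<bar>\<integral>p. h (Yn k \<omega>, p) \<partial>K (Xn \<omega> k)\<bar> \<le> (\<integral>p. 1 \<partial>K (Xn \<omega> k))"
        by (rule order_trans[OF integral_abs_bound integral_mono_AE']) (auto simp: h_def)
      then show "\<bar>\<integral>p. h (Yn k \<omega>, p) \<partial>K (Xn \<omega> k)\<bar> \<le> 1" by (simp add: K.prob_space)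
    qed
    show "integrable P (\<lambda>\<omega>. \<beta> * (if Sn \<omega> k \<le> T then 1 else 0))"
      by (rule integrable_bounded[where B="\<bar>\<beta>\<bar>"]) auto
  qed (simp add: inner_eq integral_step_Sn_le_T space_P)
  also have "\<dots> \<le> \<beta> * \<beta> ^ k" using Suc beta_nonneg by (simp add: mult_left_mono)
  finally show ?case by simp
qed

text \<open>After step \<open>k\<close> at most \<open>T\<parallel>c\<parallel> + \<parallel>g\<parallel>\<close> more is paid, and only on \<open>{S\<^sub>k \<le> T}\<close>, an event of
  probability at most \<open>\<beta>\<^sup>k\<close>.\<close>

lemma integral_Rcost_le_value_process:
  assumes \<sigma>: "is_stopping_time \<sigma>" and U: "bdd_measurable U" "\<And>s x. 0 \<le> U s x \<and> U s x \<le> BU"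
  shows "(\<integral>\<omega>. Rcost c g T \<sigma> \<omega> \<partial>P) \<le> (\<integral>\<omega>. value_process U \<sigma> k \<omega> \<partial>P) + (cmax * T + gmax) * \<beta> ^ k"
proof -
  define M where "M = cmax * T + gmax"
  have "0 \<le> M" unfolding M_def using cmax_nonneg gmax_nonneg T_nonneg by simp
  have late_int: "integrable P (\<lambda>\<omega>. M * (if Sn \<omega> k \<le> T then 1 else 0))"
    by (rule integrable_bounded[where B="\<bar>M\<bar>"]) auto
  have "AE \<omega> in P. Rcost c g T \<sigma> \<omega> \<le> value_process U \<sigma> k \<omega> + M * (if Sn \<omega> k \<le> T then 1 else 0)"
    using AE_sojourn_pos AE_space
  proof eventually_elim
    case (elim \<omega>)
    then have "\<omega> \<in> space Omega" by (simp add: space_P)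
    moreover have "0 \<le> value_at U \<sigma> k \<omega>" using U(2) by (simp add: value_at_def)
    ultimately show ?case
      using Rcost_bounds_value_process(2)[of \<omega> \<sigma> k] elim \<open>0 \<le> M\<close>
      by (auto simp: value_process_def M_def split: if_splits)
  qed
  then have "(\<integral>\<omega>. Rcost c g T \<sigma> \<omega> \<partial>P)
      \<le> (\<integral>\<omega>. value_process U \<sigma> k \<omega> + M * (if Sn \<omega> k \<le> T then 1 else 0) \<partial>P)"
    by (intro integral_mono_AE integrable_Rcost[OF \<sigma>] Bochner_Integration.integrable_add
        integrable_value_process[OF \<sigma> U] late_int)
  also have "\<dots> = (\<integral>\<omega>. value_process U \<sigma> k \<omega> \<partial>P) + M * (\<integral>\<omega>. (if Sn \<omega> k \<le> T then 1 else 0) \<partial>P)"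
    using integrable_value_process[OF \<sigma> U] late_int by simp
  also have "\<dots> \<le> (\<integral>\<omega>. value_process U \<sigma> k \<omega> \<partial>P) + M * \<beta> ^ k"
    using integral_Sn_le_T[of k] \<open>0 \<le> M\<close> by (simp add: mult_left_mono)
  finally show ?thesis by (simp add: M_def)
qed

theorem integral_Rcost_tau_eps_le:
  assumes U: "policy_supersolution \<epsilon> U"
  shows "(\<integral>\<omega>. Rcost c g T (tau_eps K c g T \<epsilon>) \<omega> \<partial>P) \<le> U T x0"
proof -
  let ?\<tau> = "tau_eps K c g T \<epsilon>"
  note \<tau> = stopping_time_tau_eps[of \<epsilon>]
  obtain BU where UB: "\<And>s x. U s x \<le> BU"
    using U by (auto simp: policy_supersolution_def bdd_measurable_def abs_le_iff)
  have U': "bdd_measurable U" "\<And>s x. 0 \<le> U s x \<and> U s x \<le> BU"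
    using U UB by (auto simp: policy_supersolution_def)
  define F where "F k = (\<integral>\<omega>. value_process U ?\<tau> k \<omega> \<partial>P)" for k
  have "F (Suc k) \<le> F k" for k
    unfolding F_def integral_value_process_Suc[OF \<tau> U']
    by (intro integral_mono integrable_value_process[OF \<tau> U'] integrable_cond_value_process[OF \<tau> U'])
       (simp add: value_process_tau_eps_le_cond[OF _ U UB] space_P)
  then have F_le: "F k \<le> F 0" for k
    by (induct k) (auto intro: order_trans)
  have F0: "F 0 \<le> U T x0"
    using integral_value_process_0[OF \<tau> U'(1)] U'(2)[of T x0] by (simp add: F_def)
  have "(\<integral>\<omega>. Rcost c g T ?\<tau> \<omega> \<partial>P) \<le> U T x0 + (cmax * T + gmax) * \<beta> ^ k" for k
    using integral_Rcost_le_value_process[OF \<tau> U', of k] F_le[of k] F0 unfolding F_def by linarith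
  then show ?thesis
    by (rule le_of_le_add_geometric) (use cmax_nonneg gmax_nonneg T_nonneg beta_nonneg beta_less_1 in auto)
qed
end

section \<open>\<open>\<epsilon>\<close>-optimality and optimality of \<open>\<tau>\<^sup>\<epsilon>\<close>\<close>

context stopping_problem
begin

definition tail_bound :: "nat \<Rightarrow> real" where
  "tail_bound n = \<beta> ^ n * gmax / (1 - \<beta>)"

lemma tail_bound_nonneg: "0 \<le> tail_bound n"
  using beta_nonneg gmax_nonneg beta_less_1 by (simp add: tail_bound_def)

lemma tail_bound_Neps_le:
  assumes eps: "0 < \<epsilon>"
  shows "tail_bound (Suc (Neps K c g T \<epsilon>)) \<le> \<epsilon>"
proof (cases "\<beta> = 0")
  case True then show ?thesis using eps by (simp add: tail_bound_def)
next
  case False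
  let ?N = "Neps K c g T \<epsilon>"
  define M where "M = T * cmax + gmax"
  have "gmax \<le> M" using T_nonneg cmax_nonneg by (simp add: M_def)
  have b: "0 < \<beta>" "0 < 1 - \<beta>" using False beta_nonneg beta_less_1 by auto
  define q where "q = (ln (\<epsilon> * (1 - \<beta>)) - ln (M + 1)) / ln \<beta>"
  have "?N = nat \<lceil>q\<rceil>" using False by (simp add: Neps_def Let_def q_def M_def)
  then have "q \<le> real ?N" by linarith
  have "ln \<beta> < 0" using b beta_less_1 by simp
  have "\<beta> ^ ?N = exp (real ?N * ln \<beta>)" using b by (simp add: exp_of_nat_mult)
  also have "\<dots> \<le> exp (q * ln \<beta>)"
    using \<open>q \<le> real ?N\<close> \<open>ln \<beta> < 0\<close> by (subst exp_le_cancel_iff) (intro mult_right_mono_neg, auto)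
  also have "q * ln \<beta> = ln (\<epsilon> * (1 - \<beta>)) - ln (M + 1)" using \<open>ln \<beta> < 0\<close> by (simp add: q_def)
  also have "exp \<dots> = \<epsilon> * (1 - \<beta>) / (M + 1)"
    using eps b \<open>gmax \<le> M\<close> gmax_nonneg by (simp add: exp_diff)
  finally have "\<beta> ^ ?N / (1 - \<beta>) \<le> \<epsilon> / (M + 1)" using b by (simp add: field_simps)
  then have "\<beta> * gmax * (\<beta> ^ ?N / (1 - \<beta>)) \<le> 1 * (M + 1) * (\<epsilon> / (M + 1))"
    using b beta_less_1 gmax_nonneg \<open>gmax \<le> M\<close> eps by (intro mult_mono) auto
  also have "\<dots> = \<epsilon>" using \<open>gmax \<le> M\<close> gmax_nonneg by simp
  also have "\<beta> * gmax * (\<beta> ^ ?N / (1 - \<beta>)) = tail_bound (Suc ?N)"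
    using b by (simp add: tail_bound_def field_simps)
  finally show ?thesis .
qed

text \<open>Where \<open>V\<^sub>m\<^sub>+\<^sub>1\<close> is given by continuation, shifting it up by its distance to the limit yields
  a function that dominates its own continuation value: the shift is damped by \<open>\<beta>\<close> and the
  error \<open>V\<^sub>m\<^sub>+\<^sub>1 - V\<^sub>m\<close> fills the gap.\<close>

lemma cont_cost_shifted_V_le:
  assumes s: "0 \<le> s" "s \<le> T" and cont: "V (Suc m) s y = cont_cost (V m) s y"
  shows "cont_cost (\<lambda>s y. V (Suc m) s y + tail_bound (Suc m)) s y \<le> V (Suc m) s y + tail_bound (Suc m)"
proof -
  have "cont_cost (\<lambda>s y. V (Suc m) s y + tail_bound (Suc m)) s y
      = cont_cost (V (Suc m)) s y + tail_bound (Suc m) * Qk K s UNIV y"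
    by (rule cont_cost_add_const[OF V_bdd_measurable])
  moreover have "tail_bound (Suc m) * Qk K s UNIV y \<le> tail_bound (Suc m) * \<beta>"
    using Qk_le_beta[OF s(2), of y] tail_bound_nonneg by (simp add: mult_left_mono)
  moreover have "cont_cost (V (Suc m)) s y \<le> cont_cost (V m) s y + \<beta> * (\<beta> ^ m * gmax)"
    using cont_cost_contraction[OF V_bdd_measurable V_bdd_measurable s, of "Suc m" m "\<beta> ^ m * gmax" y]
      V_Suc_diff_le s by auto
  moreover have "\<beta> * (\<beta> ^ m * gmax) + tail_bound (Suc m) * \<beta> = tail_bound (Suc m)"
    using beta_less_1 by (simp add: tail_bound_def field_simps)
  ultimately show ?thesis using cont by linarith
qed

lemma V_Suc_eq_cont_cost: "V (Suc m) s y \<noteq> g y \<Longrightarrow> V (Suc m) s y = cont_cost (V m) s y"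
  by (simp add: V_Suc min_def split: if_splits)

lemma policy_supersolution_V_Neps:
  "policy_supersolution \<epsilon> (\<lambda>s y. V (Suc (Neps K c g T \<epsilon>)) s y + tail_bound (Suc (Neps K c g T \<epsilon>)))"
  unfolding policy_supersolution_def
proof (intro conjI allI impI)
  let ?N = "Neps K c g T \<epsilon>"
  show "cont_cost (\<lambda>s y. V (Suc ?N) s y + tail_bound (Suc ?N)) s y \<le> V (Suc ?N) s y + tail_bound (Suc ?N)"
    if "0 < s" "s \<le> T" "(s, y) \<notin> Deps K c g T \<epsilon>" for s y
    using that by (intro cont_cost_shifted_V_le V_Suc_eq_cont_cost) (auto simp: Deps_eq)
qed (use V_bdd_measurable V_nonneg tail_bound_nonneg in \<open>auto simp: bdd_measurable_add_const Deps_eq\<close>)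

lemma policy_supersolution_V_gap:
  assumes gap: "\<And>s y. 0 < s \<Longrightarrow> s \<le> T \<Longrightarrow> (s, y) \<notin> Deps K c g T \<epsilon>
      \<Longrightarrow> tail_bound (Suc (Neps K c g T \<epsilon>)) < g y - V (Suc (Neps K c g T \<epsilon>)) s y"
    and n: "Neps K c g T \<epsilon> < n"
  shows "policy_supersolution \<epsilon> (\<lambda>s y. V n s y + tail_bound n)"
  unfolding policy_supersolution_def
proof (intro conjI allI impI)
  let ?N = "Neps K c g T \<epsilon>"
  obtain m where m: "n = Suc m" "?N \<le> m" using n by (cases n) auto
  fix s y assume s: "0 < s" "s \<le> T"
  assume "(s, y) \<notin> Deps K c g T \<epsilon>"
  from gap[OF s this] have "V (Suc ?N) s y + tail_bound (Suc ?N) < g y" by linarith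
  moreover have "V (Suc ?N) s y = cont_cost (V ?N) s y"
    using calculation tail_bound_nonneg[of "Suc ?N"] by (intro V_Suc_eq_cont_cost) auto
  moreover have "cont_cost (V m) s y \<le> cont_cost (V ?N) s y + \<beta> * tail_bound ?N"
    using cont_cost_contraction[OF V_bdd_measurable V_bdd_measurable, of s m ?N "tail_bound ?N" y]
      V_diff_le_tail[OF m(2)] s by (auto simp: tail_bound_def)
  moreover have "\<beta> * tail_bound ?N = tail_bound (Suc ?N)" by (simp add: tail_bound_def)
  ultimately have "V n s y = cont_cost (V m) s y" by (simp add: m V_Suc)
  with s show "cont_cost (\<lambda>s y. V n s y + tail_bound n) s y \<le> V n s y + tail_bound n"
    unfolding m by (intro cont_cost_shifted_V_le) auto
next
  fix s y assume "(s, y) \<in> Deps K c g T \<epsilon>"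
  then have "g y = V (Suc (Neps K c g T \<epsilon>)) s y" by (simp add: Deps_eq)
  also have "\<dots> \<le> V n s y" using n by (intro V_mono) simp
  finally show "g y \<le> V n s y + tail_bound n" using tail_bound_nonneg by (simp add: add_increasing2)
qed (use V_bdd_measurable V_nonneg tail_bound_nonneg in \<open>auto simp: bdd_measurable_add_const\<close>)

end

locale stopping_problem_family = stopping_problem K c g T
  for K :: "'e::polish_space \<Rightarrow> (real \<times> 'e) measure" and c g T +
  fixes P :: "'e \<Rightarrow> 'e omega measure"
  assumes path_measures: "\<And>x. path_measure K x (P x)"
begin

lemma stopping_problem_path: "stopping_problem_path K c g T x (P x)"
  by (intro stopping_problem_path.intro stopping_problem_axioms markov_renewal.intro
      semi_markov_axioms markov_renewal_axioms.intro path_measures)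

lemma Vtau_nonneg: "0 \<le> Vtau P c g \<sigma> T x"
proof -
  interpret stopping_problem_path K c g T x "P x" by (rule stopping_problem_path)
  show ?thesis unfolding Vtau_def
    by (intro integral_nonneg_AE AE_I2) (simp add: Rcost_bounds(1)[OF _ T_nonneg] space_P)
qed

lemma Vstar_le_Vtau: "is_stopping_time \<sigma> \<Longrightarrow> Vstar P c g T x \<le> Vtau P c g \<sigma> T x"
  unfolding Vstar_def by (rule cINF_lower) (auto intro: bdd_belowI[where m=0] Vtau_nonneg)

lemma V_le_Vtau:
  assumes "is_stopping_time \<sigma>" shows "V n T x \<le> Vtau P c g \<sigma> T x"
proof -
  interpret stopping_problem_path K c g T x "P x" by (rule stopping_problem_path)
  show ?thesis unfolding Vtau_def using assms by (rule V_le_integral_Rcost)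
qed

lemma V_le_Vstar: "V n T x \<le> Vstar P c g T x"
  unfolding Vstar_def using stopping_time_tau_eps
  by (intro cINF_greatest) (auto intro: V_le_Vtau)

lemma Vtau_tau_eps_le:
  assumes "policy_supersolution \<epsilon> U" shows "Vtau P c g (tau_eps K c g T \<epsilon>) T x \<le> U T x"
proof -
  interpret stopping_problem_path K c g T x "P x" by (rule stopping_problem_path)
  show ?thesis unfolding Vtau_def using assms by (rule integral_Rcost_tau_eps_le)
qed

theorem tau_eps_eps_optimal:
  assumes "0 < \<epsilon>"
  shows "Vtau P c g (tau_eps K c g T \<epsilon>) T x - Vstar P c g T x \<le> \<epsilon>"
  using Vtau_tau_eps_le[OF policy_supersolution_V_Neps, of \<epsilon> x] V_le_Vstar[of "Suc (Neps K c g T \<epsilon>)" x]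
    tail_bound_Neps_le[OF assms] by simp

theorem tau_eps_optimal:
  assumes "0 < \<epsilon>"
    and gap: "ereal \<epsilon> < (INF p \<in> ({0<..T} \<times> UNIV) - Deps K c g T \<epsilon>.
       ereal (g (snd p) - Gop K c g (Vn K c g (Neps K c g T \<epsilon>)) (fst p) (snd p)))"
  shows "Vtau P c g (tau_eps K c g T \<epsilon>) T x = Vstar P c g T x"
proof -
  let ?N = "Neps K c g T \<epsilon>"
  have gap': "tail_bound (Suc ?N) < g y - V (Suc ?N) s y"
    if "0 < s" "s \<le> T" "(s, y) \<notin> Deps K c g T \<epsilon>" for s y
  proof -
    have "(s, y) \<in> ({0<..T} \<times> UNIV) - Deps K c g T \<epsilon>" using that by auto
    then have "(INF p \<in> ({0<..T} \<times> UNIV) - Deps K c g T \<epsilon>. ereal (g (snd p) - Gop K c g (V ?N) (fst p) (snd p)))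
        \<le> ereal (g y - Gop K c g (V ?N) s y)"
      by (rule INF_lower2) simp
    with gap have "ereal \<epsilon> < ereal (g y - Gop K c g (V ?N) s y)" by (rule less_le_trans)
    then show ?thesis using tail_bound_Neps_le[OF \<open>0 < \<epsilon>\<close>] by (simp add: Gop_V)
  qed
  have "Vtau P c g (tau_eps K c g T \<epsilon>) T x \<le> Vtau P c g \<sigma> T x + tail_bound (Suc ?N) * \<beta> ^ k"
    if "is_stopping_time \<sigma>" for \<sigma> k
  proof -
    have "policy_supersolution \<epsilon> (\<lambda>s y. V (Suc ?N + k) s y + tail_bound (Suc ?N + k))"
      by (rule policy_supersolution_V_gap[OF gap']) auto
    from Vtau_tau_eps_le[OF this]
    have "Vtau P c g (tau_eps K c g T \<epsilon>) T x \<le> V (Suc ?N + k) T x + tail_bound (Suc ?N + k)" .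
    also have "\<dots> \<le> Vtau P c g \<sigma> T x + tail_bound (Suc ?N + k)"
      using V_le_Vtau[OF that] by (rule add_right_mono)
    also have "tail_bound (Suc ?N + k) = tail_bound (Suc ?N) * \<beta> ^ k"
      by (simp add: tail_bound_def power_add)
    finally show ?thesis .
  qed
  then have "Vtau P c g (tau_eps K c g T \<epsilon>) T x \<le> Vtau P c g \<sigma> T x" if "is_stopping_time \<sigma>" for \<sigma>
    using that tail_bound_nonneg beta_nonneg beta_less_1 by (blast intro: le_of_le_add_geometric)
  then have "Vtau P c g (tau_eps K c g T \<epsilon>) T x \<le> Vstar P c g T x"
    unfolding Vstar_def using stopping_time_tau_eps by (intro cINF_greatest) auto
  then show ?thesis using Vstar_le_Vtau[OF stopping_time_tau_eps] by (rule antisym)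
qed

end

theorem theorem4p5:
  fixes K :: "'e::polish_space \<Rightarrow> (real \<times> 'e) measure"
    and P :: "'e \<Rightarrow> 'e omega measure"
    and c g :: "'e \<Rightarrow> real"
    and T \<epsilon> :: real
  assumes K: "semi_markov_kernel K"
    and P: "\<And>x. path_measure K x (P x)"
    and c_meas: "c \<in> borel_measurable borel" and c_bdd: "bounded (range c)"
    and c_nonneg: "\<And>x. 0 \<le> c x"
    and g_meas: "g \<in> borel_measurable borel" and g_bdd: "bounded (range g)"
    and g_nonneg: "\<And>x. 0 \<le> g x"
    and T: "0 \<le> T"
    and beta: "betaQ K T < 1"
    and eps: "0 < \<epsilon>"
  shows "is_stopping_time (tau_eps K c g T \<epsilon>) \<and>
         (\<forall>x. Vtau P c g (tau_eps K c g T \<epsilon>) T x - Vstar P c g T x \<le> \<epsilon>) \<and>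
         ((INF p \<in> ({0<..T} \<times> UNIV) - Deps K c g T \<epsilon>.
             ereal (g (snd p) - Gop K c g (Vn K c g (Neps K c g T \<epsilon>)) (fst p) (snd p))) > ereal \<epsilon>
          \<longrightarrow> (\<forall>x. Vtau P c g (tau_eps K c g T \<epsilon>) T x = Vstar P c g T x))"
proof -
  interpret stopping_problem_family K c g T P
    using assms by unfold_locales (auto simp: semi_markov_def)
  show ?thesis
    using stopping_time_tau_eps tau_eps_eps_optimal[OF eps] tau_eps_optimal[OF eps] by blast
qed

end
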